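(* Consider SONATA with step-size $\alpha\in(0,1]$ under Assumptions (A), (B), (C), (W). Let $\epsilon_{opt}>0$ with $a(\alpha):=(1-\frac\alpha2)\tilde\mu_{\min}+\frac{D^\ell_{\min}}2\alpha-\frac12\epsilon_{opt}>0$, and $\sigma(\alpha)=1-\alpha\frac{a(\alpha)}{D_{\max}^2/\mu+a(\alpha)}$, $\eta(\alpha)=\frac{\frac\alpha{2\epsilon_{opt}}\frac{D_{\max}^2}\mu+\frac\alpha\mu a(\alpha)}{D_{\max}^2/\mu+a(\alpha)}$. Let $\epsilon_x,\epsilon_y>0$. For $z\in(0,1)$, an integer $K\ge0$ and a real sequence $\{s^\nu\}$ write $S^K(z)=\max_{\nu=0,\dots,K}|s^\nu|z^{-\nu}$, and let $P^K(z),X_\perp^K(z),Y_\perp^K(z),D^K(z)$ be this transform of $\{p^\nu\},\{\|x_\perp^\nu\|^2\},\{\|y_\perp^\nu\|^2\},\{\|d^\nu\|^2\}$. Then for every $K\ge0$ and every $z\in\big(\max\{\sigma(\alpha),\rho^2(1+\epsilon_x),\rho^2(1+\epsilon_y)\},1\big)$: $P^K(z)\le G_P(\alpha,z)\big(4L_{\max}^2X_\perp^K(z)+2Y_\perp^K(z)\big)+\omega_p$; $X_\perp^K(z)\le G_X(z)\rho^2\alpha^2D^K(z)+\omega_x$; $Y_\perp^K(z)\le G_Y(z)8L_{\max}^2\rho^2X_\perp^K(z)+G_Y(z)2L_{\max}^2\rho^2\alpha^2D^K(z)+\omega_y$; $D^K(z)\le C_1P^K(z)+C_2Y_\perp^K(z)$,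 where $G_P(\alpha,z)=\frac{\eta(\alpha)}{z-\sigma(\alpha)}$, $\omega_p=\frac{z}{z-\sigma(\alpha)}p^0$, $G_X(z)=\frac{1+\epsilon_x^{-1}}{z-\rho^2(1+\epsilon_x)}$, $\omega_x=\frac{z}{z-\rho^2(1+\epsilon_x)}\|x_\perp^0\|^2$, $G_Y(z)=\frac{1+\epsilon_y^{-1}}{z-\rho^2(1+\epsilon_y)}$, $\omega_y=\frac{z}{z-\rho^2(1+\epsilon_y)}\|y_\perp^0\|^2$, $C_1=\frac6\mu\big((\frac{D_{\max}}{\tilde\mu_{\min}}+1)^2+\frac{4L_{\max}^2}{\tilde\mu_{\min}^2}\big)$, $C_2=\frac4{\tilde\mu_{\min}^2}$.
   Context: Problem (P): minimize $U=F+G$ over $\mathcal K$, $F=\frac1m\sum_{i=1}^mf_i$. (A): $\mathcal K\subseteq\mathbb R^d$ nonempty closed convex; $f_i$ twice differentiable convex on open $\mathcal O\supseteq\mathcal K$; $\mu I\preceq\nabla^2F\preceq LI$ on $\mathcal K$ ($\mu>0$, $L<\infty$); $G$ convex on $\mathcal K$; $x^\star$ unique minimizer, $U^\star=U(x^\star)$. $\nabla^2f_i\preceq L_iI$ on $\mathcal K$, $L_{\max}=\max L_i$. (B): connected undirected graph on $\{1,\dots,m\}$, edges $\mathcal E$. (W): $w_{ii}>0$; for $i\ne j$, $w_{ij}>0$ iff $(i,j)\in\mathcal E$, else 0; $W$ doubly stochastic; $\rho$ = largest singular value of $W\otimes I_d-\frac1m\mathbf1\mathbf1^\top\otimes I_d$.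 (C): $\tilde f_i:\mathcal O\times\mathcal O\to\mathbb R$ $C^2$, $\nabla\tilde f_i(x;x)=\nabla f_i(x)$, $\nabla\tilde f_i(\cdot;x)$ $\tilde L_i$-Lipschitz, $\tilde f_i(\cdot;x)$ $\tilde\mu_i$-strongly convex on $\mathcal K$ for all $x\in\mathcal K$; constants $D_i^\ell\le D_i^u$ with $D_i^\ell I\preceq\nabla^2\tilde f_i(x;y)-\nabla^2F(x)\preceq D_i^uI$ on $\mathcal K\times\mathcal K$; $D_i=\max\{|D_i^\ell|,|D_i^u|\}$, $\tilde\mu_{\min}=\min\tilde\mu_i$, $D^\ell_{\min}=\min D^\ell_i$, $D_{\max}=\max D_i$. SONATA: $x_i^0\in\mathcal K$, $y_i^0=\nabla f_i(x_i^0)$; $\hat x_i^\nu=\arg\min_{x_i\in\mathcal K}\tilde f_i(x_i;x_i^\nu)+(y_i^\nu-\nabla f_i(x_i^\nu))^\top(x_i-x_i^\nu)+G(x_i)$; $d_i^\nu=\hat x_i^\nu-x_i^\nu$; $x_i^{\nu+1/2}=x_i^\nu+\alpha d_i^\nu$; $x_i^{\nu+1}=\sum_jw_{ij}x_j^{\nu+1/2}$; $y_i^{\nu+1}=\sum_jw_{ij}(y_j^\nu+\nabla f_j(x_j^{\nu+1})-\nabla f_j(x_j^\nu))$. $x^\nu,y^\nu,d^\nu$ stack local vectors; $x_\perp^\nu=x^\nu-\mathbf1_m\otimes\frac1m\sum_ix_i^\nu$, $y_\perp^\nu=y^\nu-\mathbf1_m\otimes\frac1m\sum_iy_i^\nu$;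 $p^\nu=\sum_i(U(x_i^\nu)-U^\star)$. *)

theory Defs
  imports "HOL-Analysis.Analysis"
begin

definition strongly_convex_on :: "'a::real_inner set \<Rightarrow> ('a \<Rightarrow> real) \<Rightarrow> real \<Rightarrow> bool" where
  "strongly_convex_on S f c \<longleftrightarrow> convex_on S (\<lambda>x. f x - (c / 2) * (norm x)\<^sup>2)"

definition C2_on :: "'a::euclidean_space set \<Rightarrow> ('a \<Rightarrow> real) \<Rightarrow> bool" where
  "C2_on S f \<longleftrightarrow> (\<exists>Df D2. (\<forall>p\<in>S. (f has_derivative blinfun_apply (Df p)) (at p)
       \<and> (Df has_derivative blinfun_apply (D2 p)) (at p)) \<and> continuous_on S D2)"

text \<open>Largest singular value of (W - (1/m) 1 1^T) (x) I_d, i.e. its spectral (operator 2-) norm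
  acting on stacked vectors in (R^d)^m with the Euclidean norm.\<close>
definition sonata_rho :: "('i::finite \<Rightarrow> 'i \<Rightarrow> real) \<Rightarrow> 'd::finite itself \<Rightarrow> real" where
  "sonata_rho W _ = onorm (\<lambda>x :: (real^'d)^'i.
      \<chi> i. \<Sum>j\<in>UNIV. (W i j - 1 / real CARD('i)) *\<^sub>R (x $ j))"

definition maxtr :: "(nat \<Rightarrow> real) \<Rightarrow> nat \<Rightarrow> real \<Rightarrow> real" where
  "maxtr s K z = Max ((\<lambda>\<nu>. \<bar>s \<nu>\<bar> * z powi (- int \<nu>)) ` {..K})"

definition perp_sq :: "('i::finite \<Rightarrow> 'a::real_inner) \<Rightarrow> real" where
  "perp_sq v = (\<Sum>i\<in>UNIV. (norm (v i - (1 / real CARD('i)) *\<^sub>R (\<Sum>j\<in>UNIV. v j)))\<^sup>2)"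

definition stack_sq :: "('i::finite \<Rightarrow> 'a::real_inner) \<Rightarrow> real" where
  "stack_sq v = (\<Sum>i\<in>UNIV. (norm (v i))\<^sup>2)"

end

(* Each agent moves towards the minimiser xhat of a strongly convex surrogate of U, so U at the
   new point is bounded in two ways: by the decrease of the surrogate along the segment, and, by
   convexity of U, through the optimality gap of xhat.  Weighting the two bounds eliminates the
   step length |d|^2 and gives p(nu+1) <= sigma p(nu) + eta sum_i |y_i - grad F(x_i)|^2; since the
   y_i track the average gradient, this tracking error is controlled by the consensus errors of
   x and y.  Mixing with the doubly stochastic W contracts consensus errors by rho, which gives
   linear recursions for |x_perp|^2 and |y_perp|^2 driven by |d|^2.  A nonnegative sequence with
   s(n+1) <= q s(n) + c e(n) and q < z satisfies S^K(z) <= c/(z - q) E^K(z) + z/(z - q) s(0),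
   which turns the three recursions into the first three bounds.  The last one follows from
   |xhat_i - x_i| <= (Dmax/mu_min + 1) |x_i - x*| + |y_i - grad F(x_i)| / mu_min and the
   quadratic growth of U around x*. *)

theory Submission
  imports Defs
begin

section \<open>Calculus and convexity\<close>

lemma has_real_derivative_along_line:
  fixes f :: "'a::real_normed_vector \<Rightarrow> real"
  assumes "(f has_derivative f') (at (w + t *\<^sub>R v))"
  shows "((\<lambda>s. f (w + s *\<^sub>R v)) has_real_derivative f' v) (at t)"
proof -
  have "((\<lambda>s. w + s *\<^sub>R v) has_derivative (\<lambda>s. s *\<^sub>R v)) (at t)"
    by (auto intro!: derivative_eq_intros)
  from has_derivative_compose[OF this assms]
  have "((\<lambda>s. f (w + s *\<^sub>R v)) has_derivative (\<lambda>s. f' (s *\<^sub>R v))) (at t)" .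
  moreover have "f' (s *\<^sub>R v) = f' v * s" for s
    using has_derivative_bounded_linear[OF assms] by (simp add: linear_simps)
  ultimately show ?thesis by (simp add: has_field_derivative_def)
qed

lemma derivative_ge_of_eventually_ray_ge:
  fixes g :: "'a::real_normed_vector \<Rightarrow> real"
  assumes "(g has_derivative g') (at w)"
    and "\<forall>\<^sub>F t in at_right 0. t * c \<le> g (w + t *\<^sub>R v) - g w"
  shows "c \<le> g' v"
proof -
  have "((\<lambda>t. g (w + t *\<^sub>R v)) has_real_derivative g' v) (at 0)"
    using has_real_derivative_along_line[of g g' w 0 v] assms(1) by simp
  then have "((\<lambda>t. (g (w + t *\<^sub>R v) - g w) / t) \<longlongrightarrow> g' v) (at_right 0)"
    unfolding has_field_derivative_iff by (simp add: filterlim_at_split)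
  moreover have "\<forall>\<^sub>F t in at_right 0. c \<le> (g (w + t *\<^sub>R v) - g w) / t"
    using assms(2) eventually_at_right_less[of 0]
    by eventually_elim (simp add: pos_le_divide_eq mult.commute)
  ultimately show ?thesis by (rule tendsto_lowerbound) simp
qed

lemma derivative_le_of_eventually_ray_le:
  fixes g :: "'a::real_normed_vector \<Rightarrow> real"
  assumes "(g has_derivative g') (at w)"
    and "\<forall>\<^sub>F t in at_right 0. g (w + t *\<^sub>R v) - g w \<le> t * c"
  shows "g' v \<le> c"
proof -
  have "((\<lambda>u. - g u) has_derivative (\<lambda>h. - g' h)) (at w)"
    using assms(1) by (rule has_derivative_minus)
  moreover have "\<forall>\<^sub>F t in at_right 0. t * - c \<le> - g (w + t *\<^sub>R v) - - g w"
    using assms(2) by eventually_elim simp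
  ultimately have "- c \<le> - g' v"
    by (rule derivative_ge_of_eventually_ray_ge[of "\<lambda>u. - g u" "\<lambda>h. - g' h" w "- c" v])
  then show ?thesis by simp
qed

lemma minimizer_variational_inequality:
  fixes \<phi> G :: "'a::real_inner \<Rightarrow> real"
  assumes G: "convex_on S G" and x: "x \<in> S" and u: "u \<in> S"
    and \<phi>: "(\<phi> has_derivative (\<lambda>h. g \<bullet> h)) (at x)"
    and min: "\<And>v. v \<in> S \<Longrightarrow> \<phi> x + G x \<le> \<phi> v + G v"
  shows "G x - G u \<le> g \<bullet> (u - x)"
proof -
  have "\<forall>\<^sub>F t in at_right 0. t * (G x - G u) \<le> \<phi> (x + t *\<^sub>R (u - x)) - \<phi> x"
    using eventually_at_right_real[OF zero_less_one]
  proof eventually_elim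
    case (elim t)
    have seg: "x + t *\<^sub>R (u - x) = (1 - t) *\<^sub>R x + t *\<^sub>R u" by (simp add: algebra_simps)
    have "x + t *\<^sub>R (u - x) \<in> S"
      unfolding seg using convex_on_imp_convex[OF G] x u elim by (simp add: convex_alt)
    moreover have "G (x + t *\<^sub>R (u - x)) \<le> (1 - t) * G x + t * G u"
      unfolding seg using convex_onD[OF G] x u elim by simp
    ultimately show ?case using min by (fastforce simp: algebra_simps)
  qed
  from derivative_ge_of_eventually_ray_ge[OF \<phi> this] show ?thesis .
qed

lemma convex_on_grad_tangent:
  fixes f :: "'a::real_inner \<Rightarrow> real"
  assumes f: "convex_on S f" and a: "a \<in> S" and b: "b \<in> S"
    and d: "(f has_derivative (\<lambda>h. g \<bullet> h)) (at a)"
  shows "f a + g \<bullet> (b - a) \<le> f b"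
proof -
  have "\<forall>\<^sub>F t in at_right 0. f (a + t *\<^sub>R (b - a)) - f a \<le> t * (f b - f a)"
    using eventually_at_right_real[OF zero_less_one]
  proof eventually_elim
    case (elim t)
    have "a + t *\<^sub>R (b - a) = (1 - t) *\<^sub>R a + t *\<^sub>R b" by (simp add: algebra_simps)
    with convex_onD[OF f, of t a b] a b elim show ?case by (simp add: algebra_simps)
  qed
  from derivative_le_of_eventually_ray_le[OF d this] show ?thesis by simp
qed

lemma strongly_convex_on_grad_tangent:
  fixes f :: "'a::real_inner \<Rightarrow> real"
  assumes f: "strongly_convex_on S f c" and a: "a \<in> S" and b: "b \<in> S"
    and d: "(f has_derivative (\<lambda>h. g \<bullet> h)) (at a)"
  shows "f a + g \<bullet> (b - a) + c / 2 * (norm (b - a))\<^sup>2 \<le> f b"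
proof -
  have "((\<lambda>x. f x - c / 2 * (x \<bullet> x)) has_derivative (\<lambda>h. g \<bullet> h - c / 2 * (h \<bullet> a + a \<bullet> h))) (at a)"
    by (auto intro!: derivative_eq_intros d)
  then have "((\<lambda>x. f x - c / 2 * (norm x)\<^sup>2) has_derivative (\<lambda>h. (g - c *\<^sub>R a) \<bullet> h)) (at a)"
    by (simp add: power2_norm_eq_inner inner_diff_left inner_commute algebra_simps)
  from convex_on_grad_tangent[OF f[unfolded strongly_convex_on_def] a b this] show ?thesis
    by (simp add: power2_norm_eq_inner inner_diff_left inner_diff_right inner_commute algebra_simps)
qed

lemma strongly_convex_on_segment_le:
  fixes \<phi> :: "'a::real_inner \<Rightarrow> real"
  assumes \<phi>: "strongly_convex_on S \<phi> c" and a: "a \<in> S" and b: "b \<in> S"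
    and grad: "(\<phi> has_derivative (\<lambda>h. g \<bullet> h)) (at b)" and t: "0 \<le> t" "t \<le> 1"
  shows "\<phi> (a + t *\<^sub>R (b - a)) - \<phi> a \<le> t * (g \<bullet> (b - a)) - c * t * (1 - t / 2) * (norm (b - a))\<^sup>2"
proof -
  define p where "p = a + t *\<^sub>R (b - a)"
  define N where "N = (norm (b - a))\<^sup>2"
  define M where "M = (1 - t) * (norm a)\<^sup>2 + t * (norm b)\<^sup>2"
  have seg: "p = (1 - t) *\<^sub>R a + t *\<^sub>R b"
    unfolding p_def by (simp add: algebra_simps)
  have "\<phi> p - c / 2 * (norm p)\<^sup>2 \<le> (1 - t) * (\<phi> a - c / 2 * (norm a)\<^sup>2) + t * (\<phi> b - c / 2 * (norm b)\<^sup>2)"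
    unfolding seg using convex_onD[OF \<phi>[unfolded strongly_convex_on_def]] a b t by simp
  then have "\<phi> p \<le> (1 - t) * \<phi> a + t * \<phi> b - c / 2 * (M - (norm p)\<^sup>2)"
    unfolding M_def by (simp add: algebra_simps diff_divide_distrib add_divide_distrib)
  moreover have "M - (norm p)\<^sup>2 = t * (1 - t) * N"
    unfolding M_def seg N_def power2_norm_eq_inner
    by (simp add: inner_add_left inner_add_right inner_diff_left inner_diff_right inner_commute
        algebra_simps)
  moreover have "\<phi> b + g \<bullet> (a - b) + c / 2 * N \<le> \<phi> a"
    using strongly_convex_on_grad_tangent[OF \<phi> b a grad] unfolding N_def by (simp add: norm_minus_commute)
  then have "t * (\<phi> b - \<phi> a) \<le> t * (g \<bullet> (b - a) - c / 2 * N)"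
    using t by (intro mult_left_mono) (auto simp: inner_diff_right)
  ultimately show ?thesis
    unfolding p_def[symmetric] N_def[symmetric] by (simp add: algebra_simps)
qed

lemma convex_on_hessian_psd:
  fixes f :: "'a::real_inner \<Rightarrow> real"
  assumes f: "convex_on S f" and S: "open S" and u: "u \<in> S"
    and grad: "\<And>w. w \<in> S \<Longrightarrow> (f has_derivative (\<lambda>h. g w \<bullet> h)) (at w)"
    and hess: "(g has_derivative H) (at u)"
  shows "0 \<le> H h \<bullet> h"
proof -
  have monotone: "0 \<le> (g b - g a) \<bullet> (b - a)" if "a \<in> S" "b \<in> S" for a b
    using convex_on_grad_tangent[OF f that grad[OF that(1)]]
      convex_on_grad_tangent[OF f that(2,1) grad[OF that(2)]]
    by (simp add: inner_diff_left inner_diff_right inner_commute)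
  obtain r where r: "r > 0" "ball u r \<subseteq> S"
    using S u open_contains_ball by blast
  have "0 < r / (norm h + 1)"
    using r by (simp add: add_nonneg_pos)
  from eventually_at_right_real[OF this]
  have "\<forall>\<^sub>F t in at_right 0. t * 0 \<le> g (u + t *\<^sub>R h) \<bullet> h - g u \<bullet> h"
  proof eventually_elim
    case (elim t)
    then have "t * norm h < r"
      by (smt (verit, best) mult_left_mono norm_ge_zero pos_less_divide_eq greaterThanLessThan_iff)
    with elim have "u + t *\<^sub>R h \<in> S"
      using r by (auto simp: dist_norm)
    from monotone[OF u this] have "0 \<le> t * ((g (u + t *\<^sub>R h) - g u) \<bullet> h)"
      by simp
    with elim show ?case
      by (simp add: inner_diff_left zero_le_mult_iff)
  qed
  from derivative_ge_of_eventually_ray_ge[OF has_derivative_inner_left[OF hess] this]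
  show ?thesis by simp
qed

lemma second_difference_mean_value:
  fixes f :: "'a::real_inner \<Rightarrow> real" and g :: "'a \<Rightarrow> 'a"
  assumes grad: "\<And>u. u \<in> S \<Longrightarrow> (f has_derivative (\<lambda>h. g u \<bullet> h)) (at u)"
    and seg: "\<And>t. 0 \<le> t \<Longrightarrow> t \<le> s \<Longrightarrow> x + t *\<^sub>R a \<in> S \<and> x + t *\<^sub>R a + s *\<^sub>R b \<in> S"
    and s: "0 < s"
  obtains \<xi> where "0 < \<xi>" "\<xi> < s"
    "f (x + s *\<^sub>R a + s *\<^sub>R b) - f (x + s *\<^sub>R a) - f (x + s *\<^sub>R b) + f x
      = s * ((g (x + \<xi> *\<^sub>R a + s *\<^sub>R b) - g (x + \<xi> *\<^sub>R a)) \<bullet> a)"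
proof -
  define \<phi> where "\<phi> t = f (x + s *\<^sub>R b + t *\<^sub>R a) - f (x + t *\<^sub>R a)" for t
  have deriv: "(\<phi> has_real_derivative (g (x + t *\<^sub>R a + s *\<^sub>R b) - g (x + t *\<^sub>R a)) \<bullet> a) (at t)"
    if "0 \<le> t" "t \<le> s" for t
  proof -
    have "((\<lambda>t. f (x + s *\<^sub>R b + t *\<^sub>R a)) has_real_derivative g (x + s *\<^sub>R b + t *\<^sub>R a) \<bullet> a) (at t)"
      using seg[OF that] by (intro has_real_derivative_along_line grad) (simp add: add_ac)
    moreover have "((\<lambda>t. f (x + t *\<^sub>R a)) has_real_derivative g (x + t *\<^sub>R a) \<bullet> a) (at t)"
      using seg[OF that] by (intro has_real_derivative_along_line grad) simp
    ultimately show ?thesis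
      unfolding \<phi>_def[abs_def] by (auto intro!: derivative_eq_intros simp: add_ac inner_diff_left)
  qed
  obtain \<xi> where "0 < \<xi>" "\<xi> < s"
    "\<phi> s - \<phi> 0 = (s - 0) * ((g (x + \<xi> *\<^sub>R a + s *\<^sub>R b) - g (x + \<xi> *\<^sub>R a)) \<bullet> a)"
    using MVT2[OF s, of \<phi> "\<lambda>t. (g (x + t *\<^sub>R a + s *\<^sub>R b) - g (x + t *\<^sub>R a)) \<bullet> a"] deriv by auto
  with that show ?thesis
    unfolding \<phi>_def by (simp add: algebra_simps)
qed

lemma second_difference_hessian_estimate:
  fixes f :: "'a::real_inner \<Rightarrow> real" and g :: "'a \<Rightarrow> 'a"
  assumes grad: "\<And>u. u \<in> S \<Longrightarrow> (f has_derivative (\<lambda>h. g u \<bullet> h)) (at u)"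
    and H: "linear H"
    and near: "\<And>y. norm (y - x) < \<delta> \<Longrightarrow> y \<in> S \<and> norm (g y - g x - H (y - x)) \<le> e * norm (y - x)"
    and s: "0 < s" "s * (norm a + norm b) < \<delta>" and e: "0 \<le> e"
  shows "\<bar>f (x + s *\<^sub>R a + s *\<^sub>R b) - f (x + s *\<^sub>R a) - f (x + s *\<^sub>R b) + f x - s\<^sup>2 * (H b \<bullet> a)\<bar>
    \<le> 2 * e * s\<^sup>2 * norm a * (norm a + norm b)"
proof -
  have near_pt: "x + t *\<^sub>R a + c *\<^sub>R b \<in> S
      \<and> norm (g (x + t *\<^sub>R a + c *\<^sub>R b) - g x - H (t *\<^sub>R a + c *\<^sub>R b)) \<le> e * (s * (norm a + norm b))"
    if "0 \<le> t" "t \<le> s" "0 \<le> c" "c \<le> s" for t c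
  proof -
    have "norm (t *\<^sub>R a + c *\<^sub>R b) \<le> t * norm a + c * norm b"
      using norm_triangle_ineq[of "t *\<^sub>R a" "c *\<^sub>R b"] that by simp
    also have "\<dots> \<le> s * (norm a + norm b)"
      using that by (simp add: distrib_left add_mono mult_right_mono)
    finally have small: "norm (t *\<^sub>R a + c *\<^sub>R b) \<le> s * (norm a + norm b)" .
    with near[of "x + t *\<^sub>R a + c *\<^sub>R b"] s e show ?thesis
      by (simp add: add.assoc) (meson mult_left_mono order_trans)
  qed
  have seg: "x + t *\<^sub>R a \<in> S \<and> x + t *\<^sub>R a + s *\<^sub>R b \<in> S" if "0 \<le> t" "t \<le> s" for t
    using near_pt[of t 0] near_pt[of t s] that s(1) by simp
  obtain \<xi> where \<xi>: "0 < \<xi>" "\<xi> < s"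
    and diff: "f (x + s *\<^sub>R a + s *\<^sub>R b) - f (x + s *\<^sub>R a) - f (x + s *\<^sub>R b) + f x
      = s * ((g (x + \<xi> *\<^sub>R a + s *\<^sub>R b) - g (x + \<xi> *\<^sub>R a)) \<bullet> a)"
    by (rule second_difference_mean_value[where S=S, OF grad seg s(1)])
  define r1 where "r1 = g (x + \<xi> *\<^sub>R a + s *\<^sub>R b) - g x - H (\<xi> *\<^sub>R a + s *\<^sub>R b)"
  define r2 where "r2 = g (x + \<xi> *\<^sub>R a + 0 *\<^sub>R b) - g x - H (\<xi> *\<^sub>R a + 0 *\<^sub>R b)"
  have mv: "(g (x + \<xi> *\<^sub>R a + s *\<^sub>R b) - g (x + \<xi> *\<^sub>R a)) \<bullet> a = (r1 - r2) \<bullet> a + s * (H b \<bullet> a)"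
    unfolding r1_def r2_def using H by (simp add: linear_add linear_scale algebra_simps inner_diff_left)
  have "f (x + s *\<^sub>R a + s *\<^sub>R b) - f (x + s *\<^sub>R a) - f (x + s *\<^sub>R b) + f x - s\<^sup>2 * (H b \<bullet> a)
      = s * ((r1 - r2) \<bullet> a)"
    unfolding diff mv by (simp add: power2_eq_square algebra_simps)
  then have "\<bar>f (x + s *\<^sub>R a + s *\<^sub>R b) - f (x + s *\<^sub>R a) - f (x + s *\<^sub>R b) + f x - s\<^sup>2 * (H b \<bullet> a)\<bar>
      = s * \<bar>(r1 - r2) \<bullet> a\<bar>"
    using s(1) by (simp only: abs_mult abs_of_pos)
  also have "\<dots> \<le> s * ((norm r1 + norm r2) * norm a)"
    using Cauchy_Schwarz_ineq2[of "r1 - r2" a] norm_triangle_ineq4[of r1 r2] s(1)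
    by (meson mult_left_mono mult_right_mono norm_ge_zero order_trans less_imp_le)
  also have "\<dots> \<le> s * (2 * (e * (s * (norm a + norm b))) * norm a)"
    unfolding r1_def r2_def using near_pt[of \<xi> s] near_pt[of \<xi> 0] \<xi> s
    by (intro mult_left_mono mult_right_mono) auto
  finally show ?thesis
    by (simp add: power2_eq_square algebra_simps)
qed

lemma hessian_asymmetry_le:
  fixes f :: "'a::real_inner \<Rightarrow> real" and g :: "'a \<Rightarrow> 'a"
  assumes S: "open S" "x \<in> S"
    and grad: "\<And>u. u \<in> S \<Longrightarrow> (f has_derivative (\<lambda>h. g u \<bullet> h)) (at u)"
    and hess: "(g has_derivative H) (at x)" and e: "0 < e"
  shows "\<bar>H k \<bullet> h - H h \<bullet> k\<bar> \<le> 2 * e * (norm h + norm k)\<^sup>2"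
proof -
  have H: "linear H"
    using has_derivative_bounded_linear[OF hess] bounded_linear.linear by blast
  obtain r where r: "r > 0" "ball x r \<subseteq> S"
    using S open_contains_ball by blast
  obtain \<delta> where \<delta>: "\<delta> > 0"
    "\<And>y. norm (y - x) < \<delta> \<Longrightarrow> norm (g y - g x - H (y - x)) \<le> e * norm (y - x)"
    using hess e unfolding has_derivative_at_alt by blast
  have near: "y \<in> S \<and> norm (g y - g x - H (y - x)) \<le> e * norm (y - x)"
    if "norm (y - x) < min \<delta> r" for y
    using that \<delta>(2)[of y] r(2) by (auto simp: dist_norm norm_minus_commute[of x y])
  define N where "N = norm h + norm k + 1"
  define s where "s = min \<delta> r / N"
  have N: "0 < N" "norm h + norm k < N"
    unfolding N_def by (auto intro: add_nonneg_pos)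
  then have s0: "0 < s"
    unfolding s_def using \<delta>(1) r(1) by simp
  with N have "s * (norm h + norm k) < s * N"
    by simp
  also have "s * N = min \<delta> r"
    unfolding s_def using N by simp
  finally have s: "0 < s" "s * (norm h + norm k) < min \<delta> r" "s * (norm k + norm h) < min \<delta> r"
    using s0 by (simp_all add: add.commute)
  have "\<bar>f (x + s *\<^sub>R h + s *\<^sub>R k) - f (x + s *\<^sub>R h) - f (x + s *\<^sub>R k) + f x - s\<^sup>2 * (H k \<bullet> h)\<bar>
      \<le> 2 * e * s\<^sup>2 * norm h * (norm h + norm k)"
    using second_difference_hessian_estimate[OF grad H near s(1,2)] e by simp
  moreover have "\<bar>f (x + s *\<^sub>R h + s *\<^sub>R k) - f (x + s *\<^sub>R k) - f (x + s *\<^sub>R h) + f x - s\<^sup>2 * (H h \<bullet> k)\<bar>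
      \<le> 2 * e * s\<^sup>2 * norm k * (norm k + norm h)"
    using second_difference_hessian_estimate[OF grad H near s(1,3)] e by (simp add: add_ac)
  ultimately have "\<bar>s\<^sup>2 * (H k \<bullet> h - H h \<bullet> k)\<bar>
      \<le> 2 * e * s\<^sup>2 * norm h * (norm h + norm k) + 2 * e * s\<^sup>2 * norm k * (norm k + norm h)"
    unfolding right_diff_distrib by arith
  also have "\<dots> = s\<^sup>2 * (2 * e * (norm h + norm k)\<^sup>2)"
    by (simp add: power2_eq_square algebra_simps)
  finally show ?thesis
    using s(1) by (simp add: abs_mult)
qed

lemma hessian_symmetric:
  fixes f :: "'a::real_inner \<Rightarrow> real" and g :: "'a \<Rightarrow> 'a"
  assumes S: "open S" "x \<in> S"
    and grad: "\<And>u. u \<in> S \<Longrightarrow> (f has_derivative (\<lambda>h. g u \<bullet> h)) (at u)"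
    and hess: "(g has_derivative H) (at x)"
  shows "H h \<bullet> k = H k \<bullet> h"
proof -
  define N where "N = 2 * (norm h + norm k)\<^sup>2 + 1"
  have "\<bar>H k \<bullet> h - H h \<bullet> k\<bar> \<le> 0 + \<epsilon>" if "0 < \<epsilon>" for \<epsilon>
  proof -
    have N: "0 < N" "2 * (norm h + norm k)\<^sup>2 \<le> N"
      unfolding N_def by (simp_all add: add_nonneg_pos)
    have "\<bar>H k \<bullet> h - H h \<bullet> k\<bar> \<le> 2 * (\<epsilon> / N) * (norm h + norm k)\<^sup>2"
      by (rule hessian_asymmetry_le[OF S grad hess divide_pos_pos[OF that N(1)]])
    also have "\<dots> \<le> \<epsilon>"
      using that N by (simp add: field_simps)
    finally show ?thesis by simp
  qed
  then have "\<bar>H k \<bullet> h - H h \<bullet> k\<bar> \<le> 0"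
    by (rule field_le_epsilon)
  then show ?thesis by simp
qed

lemma norm_le_of_symmetric_quadratic_bound:
  fixes B :: "'a::real_inner \<Rightarrow> 'a"
  assumes lin: "linear B" and sym: "\<And>u v. B u \<bullet> v = B v \<bullet> u"
    and quad: "\<And>u. \<bar>u \<bullet> B u\<bar> \<le> D * (norm u)\<^sup>2"
  shows "norm (B h) \<le> D * norm h"
proof (cases "B h = 0")
  case True
  then show ?thesis
    using quad[of h] by (cases "h = 0") (auto simp: zero_le_mult_iff)
next
  case False
  then have "h \<noteq> 0"
    using lin by (auto simp: linear_0)
  define k where "k = (norm h / norm (B h)) *\<^sub>R B h"
  have "norm k = norm h"
    unfolding k_def using False by simp
  then have kk: "k \<bullet> k = h \<bullet> h"
    by (metis power2_norm_eq_inner)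
  have kBh: "k \<bullet> B h = norm h * norm (B h)"
    unfolding k_def using False by (simp add: power2_norm_eq_inner[symmetric] power2_eq_square)
  have "4 * (k \<bullet> B h) = (h + k) \<bullet> B (h + k) - (h - k) \<bullet> B (h - k)"
    using lin sym[of h k]
    by (simp add: linear_add linear_diff inner_add_left inner_add_right inner_diff_left
        inner_diff_right inner_commute)
  also have "\<dots> \<le> D * ((norm (h + k))\<^sup>2 + (norm (h - k))\<^sup>2)"
    using quad[of "h + k"] quad[of "h - k"] by (simp add: abs_le_iff distrib_left)
  also have "(norm (h + k))\<^sup>2 + (norm (h - k))\<^sup>2 = 4 * (norm h)\<^sup>2"
    using kk by (simp add: power2_norm_eq_inner inner_add_left inner_add_right inner_diff_left
        inner_diff_right inner_commute)
  finally have "norm h * norm (B h) \<le> norm h * (D * norm h)"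
    unfolding kBh by (simp add: power2_eq_square mult_ac)
  then show ?thesis
    using \<open>h \<noteq> 0\<close> by simp
qed

lemma gradient_increment_ge_of_hessian:
  fixes g :: "'a::real_inner \<Rightarrow> 'a"
  assumes seg: "\<And>t. 0 \<le> t \<Longrightarrow> t \<le> 1 \<Longrightarrow> w + t *\<^sub>R v \<in> K"
    and hess: "\<And>p. p \<in> K \<Longrightarrow> (g has_derivative H p) (at p)"
    and lower: "\<And>p. p \<in> K \<Longrightarrow> c * (norm v)\<^sup>2 \<le> v \<bullet> H p v"
    and t: "0 \<le> t" "t \<le> 1"
  shows "c * (norm v)\<^sup>2 * t \<le> (g (w + t *\<^sub>R v) - g w) \<bullet> v"
proof -
  define slope where "slope s = (g (w + s *\<^sub>R v) - g w) \<bullet> v - c * (norm v)\<^sup>2 * s" for s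
  have deriv: "(slope has_real_derivative H (w + s *\<^sub>R v) v \<bullet> v - c * (norm v)\<^sup>2 * 1) (at s)
      \<and> 0 \<le> H (w + s *\<^sub>R v) v \<bullet> v - c * (norm v)\<^sup>2 * 1" if "0 \<le> s" "s \<le> t" for s
  proof
    have "((\<lambda>p. g p \<bullet> v) has_derivative (\<lambda>k. H (w + s *\<^sub>R v) k \<bullet> v)) (at (w + s *\<^sub>R v))"
      using t that by (intro has_derivative_inner_left hess seg) auto
    from has_real_derivative_along_line[OF this]
    show "(slope has_real_derivative H (w + s *\<^sub>R v) v \<bullet> v - c * (norm v)\<^sup>2 * 1) (at s)"
      unfolding slope_def[abs_def] by (auto intro!: derivative_eq_intros simp: inner_diff_left)
    show "0 \<le> H (w + s *\<^sub>R v) v \<bullet> v - c * (norm v)\<^sup>2 * 1"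
      using lower[OF seg] t that by (simp add: inner_commute)
  qed
  have "slope 0 \<le> slope t"
    by (rule DERIV_nonneg_imp_nondecreasing[OF t(1)]) (use deriv in blast)
  then show ?thesis
    by (simp add: slope_def)
qed

lemma taylor_lower_bound_of_hessian:
  fixes \<phi> :: "'a::real_inner \<Rightarrow> real" and g :: "'a \<Rightarrow> 'a"
  assumes K: "convex K" and u: "u \<in> K" and w: "w \<in> K"
    and grad: "\<And>p. p \<in> K \<Longrightarrow> (\<phi> has_derivative (\<lambda>h. g p \<bullet> h)) (at p)"
    and hess: "\<And>p. p \<in> K \<Longrightarrow> (g has_derivative H p) (at p)"
    and lower: "\<And>p. p \<in> K \<Longrightarrow> c * (norm (u - w))\<^sup>2 \<le> (u - w) \<bullet> H p (u - w)"
  shows "\<phi> w + g w \<bullet> (u - w) + c / 2 * (norm (u - w))\<^sup>2 \<le> \<phi> u"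
proof -
  define v where "v = u - w"
  have seg: "w + t *\<^sub>R v \<in> K" if "0 \<le> t" "t \<le> 1" for t
  proof -
    have "(1 - t) *\<^sub>R w + t *\<^sub>R u \<in> K"
      using K u w that by (simp add: convex_alt)
    then show ?thesis by (simp add: v_def algebra_simps)
  qed
  define gap where "gap t = \<phi> (w + t *\<^sub>R v) - (g w \<bullet> v) * t - c / 2 * (norm v)\<^sup>2 * t\<^sup>2" for t
  have deriv: "(gap has_real_derivative (g (w + t *\<^sub>R v) - g w) \<bullet> v - c * (norm v)\<^sup>2 * t) (at t)
      \<and> 0 \<le> (g (w + t *\<^sub>R v) - g w) \<bullet> v - c * (norm v)\<^sup>2 * t" if "0 \<le> t" "t \<le> 1" for t
  proof
    from has_real_derivative_along_line[OF grad[OF seg[OF that]]]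
    show "(gap has_real_derivative (g (w + t *\<^sub>R v) - g w) \<bullet> v - c * (norm v)\<^sup>2 * t) (at t)"
      unfolding gap_def[abs_def] by (auto intro!: derivative_eq_intros simp: inner_diff_left algebra_simps)
    show "0 \<le> (g (w + t *\<^sub>R v) - g w) \<bullet> v - c * (norm v)\<^sup>2 * t"
      using gradient_increment_ge_of_hessian[OF seg hess _ that] lower unfolding v_def by simp
  qed
  have "gap 0 \<le> gap 1"
    by (rule DERIV_nonneg_imp_nondecreasing[OF zero_le_one]) (use deriv in blast)
  then show ?thesis
    unfolding gap_def v_def by simp
qed

lemma convex_on_sum_fun:
  assumes "finite A" "convex S" "\<And>i. i \<in> A \<Longrightarrow> convex_on S (f i)"
  shows "convex_on S (\<lambda>x. \<Sum>i\<in>A. f i x)"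
  using assms by (induction A rule: finite_induct) (auto simp: convex_on_const)

lemma power2_add_le_weighted:
  fixes A B \<epsilon> :: real
  assumes "\<epsilon> > 0"
  shows "(A + B)\<^sup>2 \<le> (1 + \<epsilon>) * A\<^sup>2 + (1 + 1 / \<epsilon>) * B\<^sup>2"
proof -
  have "0 \<le> (\<epsilon> * A - B)\<^sup>2 / \<epsilon>"
    using assms by simp
  also have "\<dots> = \<epsilon> * A\<^sup>2 - 2 * A * B + B\<^sup>2 / \<epsilon>"
    using assms by (simp add: power2_eq_square field_simps)
  finally show ?thesis
    by (simp add: power2_eq_square field_simps)
qed

lemma norm_add_power2_le_weighted:
  fixes a b :: "'a::real_normed_vector"
  assumes "\<epsilon> > 0"
  shows "(norm (a + b))\<^sup>2 \<le> (1 + \<epsilon>) * (norm a)\<^sup>2 + (1 + 1 / \<epsilon>) * (norm b)\<^sup>2"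
  using power_mono[OF norm_triangle_ineq[of a b], of 2] power2_add_le_weighted[OF assms]
  by (meson norm_ge_zero order_trans)

lemma power2_sum3_le:
  fixes a b c :: real
  shows "(a + b + c)\<^sup>2 \<le> 3 * (a\<^sup>2 + b\<^sup>2 + c\<^sup>2)"
proof -
  have "0 \<le> (a - b)\<^sup>2 + (b - c)\<^sup>2 + (a - c)\<^sup>2"
    by simp
  then show ?thesis
    by (simp add: power2_eq_square algebra_simps)
qed

lemma inner_le_young:
  fixes s w :: "'a::real_inner"
  assumes "\<epsilon> > 0"
  shows "s \<bullet> w \<le> (norm s)\<^sup>2 / (2 * \<epsilon>) + \<epsilon> / 2 * (norm w)\<^sup>2"
proof -
  have "s \<bullet> w \<le> norm s * norm w"
    by (rule norm_cauchy_schwarz)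
  moreover have "0 \<le> (norm s - \<epsilon> * norm w)\<^sup>2 / (2 * \<epsilon>)"
    using assms by simp
  moreover have "(norm s - \<epsilon> * norm w)\<^sup>2 / (2 * \<epsilon>)
      = (norm s)\<^sup>2 / (2 * \<epsilon>) + \<epsilon> / 2 * (norm w)\<^sup>2 - norm s * norm w"
    using assms by (simp add: power2_eq_square field_simps)
  ultimately show ?thesis
    by linarith
qed

section \<open>The max transform\<close>

lemma maxtr_upper: "n \<le> K \<Longrightarrow> \<bar>s n\<bar> / z ^ n \<le> maxtr s K z"
  unfolding maxtr_def by (rule Max_ge) (auto simp: power_int_minus_divide)

lemma maxtr_least: "(\<And>n. n \<le> K \<Longrightarrow> \<bar>s n\<bar> / z ^ n \<le> B) \<Longrightarrow> maxtr s K z \<le> B"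
  unfolding maxtr_def by (subst Max_le_iff) (auto simp: power_int_minus_divide)

lemma maxtr_nonneg: "0 \<le> maxtr s K z"
  using maxtr_upper[of 0 K s z] by simp

lemma maxtr_mono:
  assumes "0 < z" and "\<And>n. n \<le> K \<Longrightarrow> \<bar>s n\<bar> \<le> \<bar>t n\<bar>"
  shows "maxtr s K z \<le> maxtr t K z"
proof (rule maxtr_least)
  fix n assume "n \<le> K"
  then have "\<bar>s n\<bar> / z ^ n \<le> \<bar>t n\<bar> / z ^ n"
    using assms by (simp add: divide_right_mono)
  also have "\<dots> \<le> maxtr t K z"
    using \<open>n \<le> K\<close> by (rule maxtr_upper)
  finally show "\<bar>s n\<bar> / z ^ n \<le> maxtr t K z" .
qed

lemma maxtr_lincomb_le:
  assumes "0 \<le> a" "0 \<le> b" "\<And>n. 0 \<le> u n" "\<And>n. 0 \<le> v n"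
  shows "maxtr (\<lambda>n. a * u n + b * v n) K z \<le> a * maxtr u K z + b * maxtr v K z"
proof (rule maxtr_least)
  fix n assume "n \<le> K"
  have "\<bar>a * u n + b * v n\<bar> / z ^ n = a * (\<bar>u n\<bar> / z ^ n) + b * (\<bar>v n\<bar> / z ^ n)"
    using assms by (simp add: add_divide_distrib)
  also have "\<dots> \<le> a * maxtr u K z + b * maxtr v K z"
    using assms maxtr_upper[OF \<open>n \<le> K\<close>, of u z] maxtr_upper[OF \<open>n \<le> K\<close>, of v z]
    by (intro add_mono mult_left_mono) auto
  finally show "\<bar>a * u n + b * v n\<bar> / z ^ n \<le> a * maxtr u K z + b * maxtr v K z" .
qed

lemma maxtr_linear_recursion_le:
  fixes s e :: "nat \<Rightarrow> real"
  assumes rec: "\<And>n. n < K \<Longrightarrow> s (Suc n) \<le> q * s n + c * e n"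
    and s: "\<And>n. 0 \<le> s n" and e: "\<And>n. 0 \<le> e n"
    and q: "0 \<le> q" "q < z" and c: "0 \<le> c"
  shows "maxtr s K z \<le> c / (z - q) * maxtr e K z + z / (z - q) * s 0"
proof -
  define E where "E = maxtr e K z"
  define B where "B = c / (z - q) * E + z / (z - q) * s 0"
  have z: "0 < z" "0 < z - q"
    using q by auto
  have E: "0 \<le> E" "\<And>n. n \<le> K \<Longrightarrow> e n / z ^ n \<le> E"
    unfolding E_def using maxtr_upper[of _ K e z] e by (auto simp: maxtr_nonneg)
  have fixpoint: "(z - q) * B = c * E + z * s 0"
    unfolding B_def using z by (simp add: distrib_left)
  \<comment> \<open>\<open>B\<close> satisfies \<open>q B + c E \<le> z B\<close>, so \<open>s n \<le> B z\<^sup>n\<close> propagates.\<close>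
  have "s n / z ^ n \<le> B" if "n \<le> K" for n
    using that
  proof (induction n)
    case 0
    have "(z - q) * s 0 \<le> (z - q) * B"
      unfolding fixpoint using s[of 0] q c E(1) by (simp add: algebra_simps)
    then show ?case
      using z by simp
  next
    case (Suc n)
    then have IH: "s n / z ^ n \<le> B" and n: "n < K"
      by auto
    have "s (Suc n) / z ^ Suc n \<le> (q * s n + c * e n) / z ^ Suc n"
      using rec[OF n] z by (simp add: divide_right_mono)
    also have "\<dots> = (q * (s n / z ^ n) + c * (e n / z ^ n)) / z"
      using z by (simp add: field_simps)
    also have "\<dots> \<le> (q * B + c * E) / z"
      using IH E(2)[of n] n q c z by (intro divide_right_mono add_mono mult_left_mono) auto
    also have "\<dots> \<le> B"
      using fixpoint s[of 0] z by (simp add: divide_le_eq algebra_simps)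
    finally show ?case .
  qed
  then show ?thesis
    unfolding B_def E_def using s by (intro maxtr_least) auto
qed

section \<open>Stacked vectors and doubly stochastic mixing\<close>

definition mean :: "('i::finite \<Rightarrow> 'a::real_vector) \<Rightarrow> 'a" where
  "mean v = (1 / real CARD('i)) *\<^sub>R (\<Sum>j\<in>UNIV. v j)"

lemma perp_sq_eq_stack_sq_centered: "perp_sq v = stack_sq (\<lambda>i. v i - mean v)"
  unfolding perp_sq_def stack_sq_def mean_def ..

lemma stack_sq_nonneg [simp]: "0 \<le> stack_sq v"
  unfolding stack_sq_def by (simp add: sum_nonneg)

lemma perp_sq_nonneg [simp]: "0 \<le> perp_sq v"
  unfolding perp_sq_eq_stack_sq_centered by (rule stack_sq_nonneg)

lemma stack_sq_scaleR: "stack_sq (\<lambda>i. c *\<^sub>R v i) = c\<^sup>2 * stack_sq v"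
  unfolding stack_sq_def by (simp add: sum_distrib_left power_mult_distrib)

lemma stack_sq_add_le_weighted:
  assumes "\<epsilon> > 0"
  shows "stack_sq (\<lambda>i. a i + b i) \<le> (1 + \<epsilon>) * stack_sq a + (1 + 1 / \<epsilon>) * stack_sq b"
  unfolding stack_sq_def sum_distrib_left sum.distrib[symmetric]
  by (intro sum_mono norm_add_power2_le_weighted assms)

lemma mean_add: "mean (\<lambda>i. a i + b i) = mean a + mean b"
  unfolding mean_def by (simp add: sum.distrib scaleR_add_right)

lemma mean_scaleR: "mean (\<lambda>i. c *\<^sub>R v i) = c *\<^sub>R mean v"
  unfolding mean_def by (simp add: scaleR_sum_right)

lemma sum_centered_eq_0:
  fixes v :: "'i::finite \<Rightarrow> 'a::real_vector"
  shows "(\<Sum>i\<in>UNIV. v i - mean v) = 0"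
  unfolding mean_def by (simp add: sum_subtractf sum_constant_scaleR)

lemma perp_sq_scaleR: "perp_sq (\<lambda>i. c *\<^sub>R v i) = c\<^sup>2 * perp_sq v"
  unfolding perp_sq_eq_stack_sq_centered mean_scaleR
  by (simp add: stack_sq_scaleR flip: scaleR_diff_right)

lemma perp_sq_add_le_weighted:
  assumes "\<epsilon> > 0"
  shows "perp_sq (\<lambda>i. a i + b i) \<le> (1 + \<epsilon>) * perp_sq a + (1 + 1 / \<epsilon>) * perp_sq b"
  unfolding perp_sq_eq_stack_sq_centered mean_add
  using stack_sq_add_le_weighted[OF assms, of "\<lambda>i. a i - mean a" "\<lambda>i. b i - mean b"]
  by (simp add: algebra_simps)

lemma perp_sq_le_stack_sq:
  fixes v :: "'i::finite \<Rightarrow> 'a::real_inner"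
  shows "perp_sq v \<le> stack_sq v"
proof -
  define c where "c = mean v"
  have sum_v: "(\<Sum>j\<in>UNIV. v j) = real CARD('i) *\<^sub>R c"
    unfolding c_def mean_def by simp
  have "perp_sq v = (\<Sum>i\<in>UNIV. (norm (v i))\<^sup>2 - 2 * (v i \<bullet> c) + (norm c)\<^sup>2)"
    unfolding perp_sq_eq_stack_sq_centered stack_sq_def c_def[symmetric]
    by (simp add: power2_norm_eq_inner inner_diff_left inner_diff_right inner_commute algebra_simps)
  also have "\<dots> = stack_sq v - 2 * ((\<Sum>j\<in>UNIV. v j) \<bullet> c) + real CARD('i) * (norm c)\<^sup>2"
    unfolding stack_sq_def by (simp add: sum.distrib sum_subtractf sum_distrib_left inner_sum_left)
  also have "\<dots> = stack_sq v - real CARD('i) * (norm c)\<^sup>2"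
    unfolding sum_v by (simp add: power2_norm_eq_inner)
  finally show ?thesis
    by simp
qed

lemma sum_pairwise_dist_sq:
  fixes v :: "'i::finite \<Rightarrow> 'a::real_inner"
  shows "(\<Sum>i\<in>UNIV. \<Sum>j\<in>UNIV. (norm (v j - v i))\<^sup>2) = 2 * real CARD('i) * perp_sq v"
proof -
  define a where "a k = v k - mean v" for k
  have "(\<Sum>j\<in>UNIV. a j) = 0"
    unfolding a_def by (rule sum_centered_eq_0)
  then have cross: "(\<Sum>j\<in>UNIV. a j \<bullet> a i) = 0" for i
    by (simp add: inner_sum_left[symmetric])
  have "(norm (v j - v i))\<^sup>2 = (norm (a j))\<^sup>2 - 2 * (a j \<bullet> a i) + (norm (a i))\<^sup>2" for i j
    unfolding a_def
    by (simp add: power2_norm_eq_inner inner_diff_left inner_diff_right inner_commute)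
  then have "(\<Sum>i\<in>UNIV. \<Sum>j\<in>UNIV. (norm (v j - v i))\<^sup>2)
      = (\<Sum>i\<in>UNIV. (\<Sum>j\<in>UNIV. (norm (a j))\<^sup>2) + real CARD('i) * (norm (a i))\<^sup>2)"
    using cross by (simp add: sum.distrib sum_subtractf sum_distrib_left[symmetric])
  also have "\<dots> = 2 * real CARD('i) * perp_sq v"
    unfolding perp_sq_eq_stack_sq_centered stack_sq_def a_def
    by (simp add: sum.distrib sum_distrib_left[symmetric])
  finally show ?thesis .
qed

lemma power2_norm_convex_comb_le:
  fixes v :: "'a \<Rightarrow> 'b::real_normed_vector"
  assumes "finite S" "(\<Sum>j\<in>S. w j) = 1" "\<And>j. j \<in> S \<Longrightarrow> 0 \<le> w j"
  shows "(norm (\<Sum>j\<in>S. w j *\<^sub>R v j))\<^sup>2 \<le> (\<Sum>j\<in>S. w j * (norm (v j))\<^sup>2)"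
proof -
  have "norm (\<Sum>j\<in>S. w j *\<^sub>R v j) \<le> (\<Sum>j\<in>S. w j * norm (v j))"
    using norm_sum[of "\<lambda>j. w j *\<^sub>R v j" S] assms(3) by simp
  then have "(norm (\<Sum>j\<in>S. w j *\<^sub>R v j))\<^sup>2 \<le> (\<Sum>j\<in>S. w j * norm (v j))\<^sup>2"
    by (intro power_mono) auto
  also have "\<dots> \<le> (\<Sum>j\<in>S. w j * (norm (v j))\<^sup>2)"
    using convex_on_sum[OF assms(1) _ convex_power2, of w "\<lambda>j. norm (v j)"] assms
    by (cases "S = {}") auto
  finally show ?thesis .
qed

lemma sum_power2_add_mean_le:
  fixes e :: "'i::finite \<Rightarrow> real"
  shows "(\<Sum>i\<in>UNIV. (e i + (\<Sum>j\<in>UNIV. e j) / real CARD('i))\<^sup>2) \<le> 4 * (\<Sum>i\<in>UNIV. (e i)\<^sup>2)"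
proof -
  define eb where "eb = (\<Sum>j\<in>UNIV. e j) / real CARD('i)"
  have "eb\<^sup>2 \<le> (\<Sum>j\<in>UNIV. (1 / real CARD('i)) * (e j)\<^sup>2)"
    using power2_norm_convex_comb_le[of UNIV "\<lambda>_. 1 / real CARD('i)" e]
    unfolding eb_def by (simp add: sum_divide_distrib)
  then have "real CARD('i) * eb\<^sup>2 \<le> (\<Sum>j\<in>UNIV. (e j)\<^sup>2)"
    by (simp add: field_simps flip: sum_distrib_left sum_divide_distrib)
  moreover have "(\<Sum>i\<in>UNIV. (e i + eb)\<^sup>2) \<le> (\<Sum>i\<in>UNIV. 2 * (e i)\<^sup>2 + 2 * eb\<^sup>2)"
    using power2_add_le_weighted[of 1] by (intro sum_mono) simp
  moreover have "(\<Sum>i\<in>UNIV. 2 * (e i)\<^sup>2 + 2 * eb\<^sup>2) = 2 * (\<Sum>i\<in>UNIV. (e i)\<^sup>2) + 2 * (real CARD('i) * eb\<^sup>2)"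
    by (simp add: sum.distrib sum_distrib_left)
  ultimately show ?thesis
    unfolding eb_def by linarith
qed

locale doubly_stochastic =
  fixes W :: "'i::finite \<Rightarrow> 'i \<Rightarrow> real"
  assumes W_nonneg: "\<And>i j. 0 \<le> W i j"
    and W_rows: "\<And>i. (\<Sum>j\<in>UNIV. W i j) = 1"
    and W_cols: "\<And>j. (\<Sum>i\<in>UNIV. W i j) = 1"
begin

lemma sum_mix:
  fixes v :: "'i \<Rightarrow> 'a::real_vector"
  shows "(\<Sum>i\<in>UNIV. \<Sum>j\<in>UNIV. W i j *\<^sub>R v j) = (\<Sum>j\<in>UNIV. v j)"
proof -
  have "(\<Sum>i\<in>UNIV. W i j *\<^sub>R v j) = v j" for j
    unfolding scaleR_sum_left[symmetric] using W_cols[of j] by simp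
  then show ?thesis
    by (subst sum.swap) simp
qed

lemma mean_mix: "mean (\<lambda>i. \<Sum>j\<in>UNIV. W i j *\<^sub>R v j) = mean v"
  unfolding mean_def sum_mix ..

lemma stack_sq_mix_le: "stack_sq (\<lambda>i. \<Sum>j\<in>UNIV. W i j *\<^sub>R v j) \<le> stack_sq v"
proof -
  have "stack_sq (\<lambda>i. \<Sum>j\<in>UNIV. W i j *\<^sub>R v j) \<le> (\<Sum>i\<in>UNIV. \<Sum>j\<in>UNIV. W i j * (norm (v j))\<^sup>2)"
    unfolding stack_sq_def using power2_norm_convex_comb_le[OF _ W_rows W_nonneg]
    by (intro sum_mono) auto
  also have "\<dots> = stack_sq v"
    unfolding stack_sq_def by (subst sum.swap) (simp add: W_cols flip: sum_distrib_right)
  finally show ?thesis .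
qed

text \<open>The centred part of a mixed vector is the operator defining \<open>sonata_rho\<close> applied to the
  centred part of the vector, because the rows of \<open>W\<close> sum to one.\<close>
lemma perp_sq_mix_le:
  fixes v :: "'i \<Rightarrow> real^'d::finite"
  shows "perp_sq (\<lambda>i. \<Sum>j\<in>UNIV. W i j *\<^sub>R v j) \<le> (sonata_rho W TYPE('d))\<^sup>2 * perp_sq v"
proof -
  define n where "n = real CARD('i)"
  define M where "M x = (\<chi> i. \<Sum>j\<in>UNIV. (W i j - 1 / n) *\<^sub>R (x $ j))" for x :: "(real^'d)^'i"
  define c where "c i = v i - mean v" for i
  have "linear M"
    unfolding M_def
    by (rule linearI) (simp_all add: vec_eq_iff sum.distrib scaleR_add_right scaleR_sum_right mult_ac)
  then have "norm (M (\<chi> i. c i)) \<le> onorm M * norm (\<chi> i. c i)"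
    by (intro onorm linear_conv_bounded_linear[THEN iffD1])
  then have "(norm (M (\<chi> i. c i)))\<^sup>2 \<le> (sonata_rho W TYPE('d))\<^sup>2 * (norm (\<chi> i. c i))\<^sup>2"
    unfolding sonata_rho_def M_def n_def by (simp add: power_mult_distrib[symmetric] power_mono)
  moreover have "(norm (\<chi> i. c i))\<^sup>2 = perp_sq v"
    unfolding perp_sq_eq_stack_sq_centered stack_sq_def c_def norm_vec_def L2_set_def
    by (simp add: sum_nonneg)
  moreover have "M (\<chi> i. c i) $ i = (\<Sum>j\<in>UNIV. W i j *\<^sub>R v j) - mean v" for i
  proof -
    have "(\<Sum>j\<in>UNIV. (1 / n) *\<^sub>R c j) = 0"
      unfolding c_def using sum_centered_eq_0[of v] by (simp flip: scaleR_sum_right)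
    then show ?thesis
      unfolding M_def c_def
      by (simp add: scaleR_diff_left scaleR_diff_right sum_subtractf W_rows flip: scaleR_sum_left)
  qed
  then have "(norm (M (\<chi> i. c i)))\<^sup>2 = perp_sq (\<lambda>i. \<Sum>j\<in>UNIV. W i j *\<^sub>R v j)"
    unfolding perp_sq_eq_stack_sq_centered stack_sq_def mean_mix norm_vec_def L2_set_def
    by (simp add: sum_nonneg)
  ultimately show ?thesis
    by simp
qed

end

section \<open>Problem data and surrogates\<close>

locale sonata_problem =
  fixes Kset Oset :: "(real^'d::finite) set"
    and f :: "'i::finite \<Rightarrow> real^'d \<Rightarrow> real"
    and gf :: "'i \<Rightarrow> real^'d \<Rightarrow> real^'d"
    and Hf :: "'i \<Rightarrow> real^'d \<Rightarrow> real^'d \<Rightarrow> real^'d"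
    and G :: "real^'d \<Rightarrow> real"
    and \<mu> :: real and Li :: "'i \<Rightarrow> real" and xstar :: "real^'d"
    and ft :: "'i \<Rightarrow> real^'d \<Rightarrow> real^'d \<Rightarrow> real"
    and gft :: "'i \<Rightarrow> real^'d \<Rightarrow> real^'d \<Rightarrow> real^'d"
    and Hft :: "'i \<Rightarrow> real^'d \<Rightarrow> real^'d \<Rightarrow> real^'d \<Rightarrow> real^'d"
    and \<mu>t Dl Du :: "'i \<Rightarrow> real"
    and m :: real and F :: "real^'d \<Rightarrow> real" and HF :: "real^'d \<Rightarrow> real^'d \<Rightarrow> real^'d"
    and U :: "real^'d \<Rightarrow> real" and Ustar Lmax :: real and D :: "'i \<Rightarrow> real"
    and \<mu>tmin Dlmin Dmax :: real
  assumes m_def: "m = real CARD('i)"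
    and F_def: "F = (\<lambda>u. (1 / m) * (\<Sum>i\<in>UNIV. f i u))"
    and HF_def: "HF = (\<lambda>u h. (1 / m) *\<^sub>R (\<Sum>i\<in>UNIV. Hf i u h))"
    and U_def: "U = (\<lambda>u. F u + G u)"
    and Ustar_def: "Ustar = F xstar + G xstar"
    and Lmax_def: "Lmax = Max (range Li)"
    and D_def: "D = (\<lambda>i. max \<bar>Dl i\<bar> \<bar>Du i\<bar>)"
    and mutmin_def: "\<mu>tmin = Min (range \<mu>t)"
    and Dlmin_def: "Dlmin = Min (range Dl)"
    and Dmax_def: "Dmax = Max (range D)"
    and K_nonempty: "Kset \<noteq> {}" and K_convex: "convex Kset"
    and O_open: "open Oset" and K_sub_O: "Kset \<subseteq> Oset"
    and f_grad: "\<And>i u. u \<in> Oset \<Longrightarrow> (f i has_derivative (\<lambda>h. gf i u \<bullet> h)) (at u)"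
    and f_hess: "\<And>i u. u \<in> Oset \<Longrightarrow> (gf i has_derivative Hf i u) (at u)"
    and f_convex: "\<And>i. convex_on Oset (f i)"
    and mu_pos: "\<mu> > 0"
    and F_hess_lower: "\<And>u h. u \<in> Kset \<Longrightarrow> \<mu> * (norm h)\<^sup>2 \<le> h \<bullet> HF u h"
    and G_convex: "convex_on Kset G"
    and xstar_in: "xstar \<in> Kset"
    and xstar_min: "\<And>u. u \<in> Kset \<Longrightarrow> U xstar \<le> U u"
    and fi_hess_bound: "\<And>i u h. u \<in> Kset \<Longrightarrow> h \<bullet> Hf i u h \<le> Li i * (norm h)\<^sup>2"
    and ft_grad: "\<And>i u v. u \<in> Oset \<Longrightarrow> v \<in> Oset \<Longrightarrow>
        ((\<lambda>w. ft i w v) has_derivative (\<lambda>h. gft i u v \<bullet> h)) (at u)"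
    and ft_hess: "\<And>i u v. u \<in> Oset \<Longrightarrow> v \<in> Oset \<Longrightarrow>
        ((\<lambda>w. gft i w v) has_derivative Hft i u v) (at u)"
    and ft_consistent: "\<And>i u. u \<in> Oset \<Longrightarrow> gft i u u = gf i u"
    and ft_strongly_convex: "\<And>i v. v \<in> Kset \<Longrightarrow> strongly_convex_on Kset (\<lambda>w. ft i w v) (\<mu>t i)"
    and mut_pos: "\<And>i. \<mu>t i > 0"
    and ft_hess_bounds: "\<And>i u v h. u \<in> Kset \<Longrightarrow> v \<in> Kset \<Longrightarrow>
        Dl i * (norm h)\<^sup>2 \<le> h \<bullet> (Hft i u v h - HF u h) \<and> h \<bullet> (Hft i u v h - HF u h) \<le> Du i * (norm h)\<^sup>2"
begin

definition gF :: "real^'d \<Rightarrow> real^'d" where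
  "gF u = (1 / m) *\<^sub>R (\<Sum>i\<in>UNIV. gf i u)"

lemma m_pos: "0 < m"
  using m_def by simp

lemma in_O: "u \<in> Kset \<Longrightarrow> u \<in> Oset"
  using K_sub_O by blast

lemma F_grad: "u \<in> Oset \<Longrightarrow> (F has_derivative (\<lambda>h. gF u \<bullet> h)) (at u)"
  unfolding F_def gF_def using m_pos
  by (auto intro!: derivative_eq_intros f_grad simp: inner_sum_left)

lemma F_hess: "u \<in> Oset \<Longrightarrow> (gF has_derivative HF u) (at u)"
  unfolding HF_def gF_def[abs_def] using m_pos
  by (auto intro!: derivative_eq_intros f_hess)

lemma linear_Hf: "u \<in> Oset \<Longrightarrow> linear (Hf i u)"
  using has_derivative_bounded_linear[OF f_hess] bounded_linear.linear by blast

lemma linear_HF: "u \<in> Oset \<Longrightarrow> linear (HF u)"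
  using has_derivative_bounded_linear[OF F_hess] bounded_linear.linear by blast

lemma linear_Hft: "u \<in> Oset \<Longrightarrow> v \<in> Oset \<Longrightarrow> linear (Hft i u v)"
  using has_derivative_bounded_linear[OF ft_hess] bounded_linear.linear by blast

lemma Hf_symmetric: "u \<in> Oset \<Longrightarrow> Hf i u h \<bullet> k = Hf i u k \<bullet> h"
  by (rule hessian_symmetric[OF O_open _ f_grad f_hess])

lemma HF_symmetric: "u \<in> Oset \<Longrightarrow> HF u h \<bullet> k = HF u k \<bullet> h"
  unfolding HF_def by (simp add: inner_sum_left Hf_symmetric)

lemma Hft_symmetric: "u \<in> Oset \<Longrightarrow> v \<in> Oset \<Longrightarrow> Hft i u v h \<bullet> k = Hft i u v k \<bullet> h"
  by (rule hessian_symmetric[OF O_open _ ft_grad ft_hess])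

lemma Hf_psd: "u \<in> Oset \<Longrightarrow> 0 \<le> Hf i u h \<bullet> h"
  by (rule convex_on_hessian_psd[OF f_convex O_open _ f_grad f_hess])

lemma Li_nonneg: "0 \<le> Li i"
proof -
  obtain u where u: "u \<in> Kset"
    using K_nonempty by blast
  obtain h :: "real^'d" where h: "norm h = 1"
    using vector_choose_size[of 1] by auto
  have "0 \<le> Hf i u h \<bullet> h"
    using Hf_psd in_O[OF u] by blast
  also have "\<dots> \<le> Li i"
    using fi_hess_bound[OF u, where i=i and h=h] h by (simp add: inner_commute)
  finally show ?thesis .
qed

lemma Li_le_Lmax: "Li i \<le> Lmax"
  unfolding Lmax_def by (rule Max_ge) auto

lemma Lmax_nonneg: "0 \<le> Lmax"
  using Li_nonneg Li_le_Lmax order_trans by blast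

lemma gf_lipschitz:
  assumes "u \<in> Kset" "w \<in> Kset"
  shows "norm (gf i u - gf i w) \<le> Lmax * norm (u - w)"
proof -
  have Hf_bound: "norm (Hf i p h) \<le> Li i * norm h" if "p \<in> Kset" for p h
  proof (rule norm_le_of_symmetric_quadratic_bound[OF linear_Hf])
    show "p \<in> Oset" "Hf i p a \<bullet> b = Hf i p b \<bullet> a" for a b
      using in_O[OF that] Hf_symmetric by auto
    show "\<bar>h \<bullet> Hf i p h\<bar> \<le> Li i * (norm h)\<^sup>2" for h
      using Hf_psd[OF in_O[OF that], of i h] fi_hess_bound[OF that, where i=i and h=h] by (simp add: inner_commute)
  qed
  have "norm (gf i u - gf i w) \<le> Li i * norm (u - w)"
    by (rule differentiable_bound[OF K_convex, where f'="Hf i"])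
      (use assms in \<open>auto intro: has_derivative_at_withinI f_hess in_O onorm_le Hf_bound\<close>)
  also have "\<dots> \<le> Lmax * norm (u - w)"
    by (intro mult_right_mono Li_le_Lmax) simp
  finally show ?thesis .
qed

lemma D_le_Dmax: "D i \<le> Dmax"
  unfolding Dmax_def by (rule Max_ge) auto

lemma mutmin_le: "\<mu>tmin \<le> \<mu>t i"
  unfolding mutmin_def by (rule Min_le) auto

lemma mutmin_pos: "0 < \<mu>tmin"
  using mut_pos Min_in[of "range \<mu>t"] unfolding mutmin_def by auto

lemma Dlmin_le: "Dlmin \<le> Dl i"
  unfolding Dlmin_def by (rule Min_le) auto

text \<open>\<open>Hft i u v - HF u\<close> is the Hessian of the gap \<open>ft i \<cdot> v - F\<close> between a surrogate and the
  objective; its spectrum lies in \<open>[Dl i, Du i]\<close>, so its norm is at most \<open>D i\<close>.\<close>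
lemma surrogate_gap_grad_lipschitz:
  assumes u: "u \<in> Kset" and w: "w \<in> Kset" and v: "v \<in> Kset"
  shows "norm ((gft i u v - gF u) - (gft i w v - gF w)) \<le> D i * norm (u - w)"
proof -
  have bound: "norm (Hft i p v h - HF p h) \<le> D i * norm h" if p: "p \<in> Kset" for p h
  proof (rule norm_le_of_symmetric_quadratic_bound)
    show "linear (\<lambda>h. Hft i p v h - HF p h)"
      using linear_Hft[OF in_O[OF p] in_O[OF v]] linear_HF[OF in_O[OF p]] by (rule linear_compose_sub)
    show "(Hft i p v a - HF p a) \<bullet> b = (Hft i p v b - HF p b) \<bullet> a" for a b
      using Hft_symmetric[OF in_O[OF p] in_O[OF v]] HF_symmetric[OF in_O[OF p]]
      by (simp add: inner_diff_left)
    show "\<bar>h \<bullet> (Hft i p v h - HF p h)\<bar> \<le> D i * (norm h)\<^sup>2" for h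
    proof -
      have "- D i * (norm h)\<^sup>2 \<le> Dl i * (norm h)\<^sup>2" "Du i * (norm h)\<^sup>2 \<le> D i * (norm h)\<^sup>2"
        unfolding D_def by (intro mult_right_mono; simp)+
      then show ?thesis
        using ft_hess_bounds[OF p v, of i h] by (simp add: abs_le_iff)
    qed
  qed
  show ?thesis
  proof (rule differentiable_bound[OF K_convex, where f="\<lambda>u. gft i u v - gF u"])
    fix p assume p: "p \<in> Kset"
    show "((\<lambda>u. gft i u v - gF u) has_derivative (\<lambda>h. Hft i p v h - HF p h)) (at p within Kset)"
      using has_derivative_diff[OF ft_hess[OF in_O[OF p] in_O[OF v]] F_hess[OF in_O[OF p]]]
      by (rule has_derivative_at_withinI)
    show "onorm (\<lambda>h. Hft i p v h - HF p h) \<le> D i"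
      using bound[OF p] by (intro onorm_le) simp
  qed (use u w in simp_all)
qed

lemma F_strongly_convex_lower:
  assumes "u \<in> Kset" "w \<in> Kset"
  shows "F w + gF w \<bullet> (u - w) + \<mu> / 2 * (norm (u - w))\<^sup>2 \<le> F u"
  using assms by (intro taylor_lower_bound_of_hessian[OF K_convex, where H=HF])
    (auto intro: F_grad F_hess in_O F_hess_lower)

lemma surrogate_gap_lower:
  assumes u: "u \<in> Kset" and w: "w \<in> Kset" and v: "v \<in> Kset"
  shows "(ft i w v - F w) + (gft i w v - gF w) \<bullet> (u - w) + Dl i / 2 * (norm (u - w))\<^sup>2 \<le> ft i u v - F u"
proof (rule taylor_lower_bound_of_hessian[OF K_convex u w, where H="\<lambda>p h. Hft i p v h - HF p h"])
  fix p assume p: "p \<in> Kset"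
  show "((\<lambda>u. ft i u v - F u) has_derivative (\<lambda>h. (gft i p v - gF p) \<bullet> h)) (at p)"
    using ft_grad[OF in_O[OF p] in_O[OF v]] F_grad[OF in_O[OF p]]
    by (auto intro!: derivative_eq_intros simp: inner_diff_left)
  show "((\<lambda>u. gft i u v - gF u) has_derivative (\<lambda>h. Hft i p v h - HF p h)) (at p)"
    using ft_hess[OF in_O[OF p] in_O[OF v]] F_hess[OF in_O[OF p]] by (rule has_derivative_diff)
  show "Dl i * (norm (u - w))\<^sup>2 \<le> (u - w) \<bullet> (Hft i p v (u - w) - HF p (u - w))"
    using ft_hess_bounds[OF p v] by blast
qed

lemma F_convex: "convex_on Kset F"
proof -
  have "convex_on Kset (\<lambda>u. \<Sum>i\<in>UNIV. f i u)"
    using convex_on_subset[OF f_convex K_sub_O K_convex] K_convex by (intro convex_on_sum_fun) auto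
  then show ?thesis
    unfolding F_def using m_pos by (intro convex_on_cmul) auto
qed

lemma U_convex: "convex_on Kset U"
  unfolding U_def using F_convex G_convex by (rule convex_on_add)

lemma xstar_variational_inequality:
  assumes "u \<in> Kset"
  shows "G xstar - G u \<le> gF xstar \<bullet> (u - xstar)"
  using assms xstar_min unfolding U_def
  by (intro minimizer_variational_inequality[OF G_convex xstar_in _ F_grad[OF in_O[OF xstar_in]]])
    auto

lemma U_quadratic_growth:
  assumes "u \<in> Kset"
  shows "\<mu> / 2 * (norm (u - xstar))\<^sup>2 \<le> U u - Ustar"
  using F_strongly_convex_lower[OF assms xstar_in] xstar_variational_inequality[OF assms]
  unfolding U_def Ustar_def by linarith


definition best_response :: "'i \<Rightarrow> real^'d \<Rightarrow> real^'d \<Rightarrow> real^'d \<Rightarrow> bool" where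
  "best_response i v y xh \<longleftrightarrow> xh \<in> Kset \<and> (\<forall>u\<in>Kset.
     ft i xh v + (y - gf i v) \<bullet> (xh - v) + G xh \<le> ft i u v + (y - gf i v) \<bullet> (u - v) + G u)"

lemma best_response_in_K: "best_response i v y xh \<Longrightarrow> xh \<in> Kset"
  unfolding best_response_def by blast

lemma best_response_variational_inequality:
  assumes br: "best_response i v y xh" and v: "v \<in> Kset" and u: "u \<in> Kset"
  shows "G xh - G u \<le> (gft i xh v + y - gf i v) \<bullet> (u - xh)"
proof -
  have xh: "xh \<in> Kset"
    using br by (rule best_response_in_K)
  have "((\<lambda>w. ft i w v + (y - gf i v) \<bullet> (w - v)) has_derivative
      (\<lambda>h. (gft i xh v + y - gf i v) \<bullet> h)) (at xh)"
    using ft_grad[OF in_O[OF xh] in_O[OF v]]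
    by (auto intro!: derivative_eq_intros simp: inner_add_left inner_diff_left)
  from minimizer_variational_inequality[OF G_convex xh u this] br show ?thesis
    unfolding best_response_def by blast
qed

lemma best_response_descent:
  assumes br: "best_response i v y xh" and v: "v \<in> Kset"
    and t: "0 \<le> t" "t \<le> 1" and \<epsilon>: "0 < \<epsilon>"
  shows "U (v + t *\<^sub>R (xh - v)) \<le> U v - t * ((1 - t / 2) * \<mu>t i + Dl i / 2 * t - \<epsilon> / 2) * (norm (xh - v))\<^sup>2
           + t / (2 * \<epsilon>) * (norm (y - gF v))\<^sup>2"
proof -
  define dd where "dd = xh - v"
  define p where "p = v + t *\<^sub>R dd"
  define N where "N = (norm dd)\<^sup>2"
  define Q where "Q = (norm (y - gF v))\<^sup>2"
  define I1 where "I1 = gft i xh v \<bullet> dd"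
  define I2 where "I2 = (y - gf i v) \<bullet> dd"
  define I3 where "I3 = (gf i v - gF v) \<bullet> dd"
  have xh: "xh \<in> Kset"
    using br by (rule best_response_in_K)
  have seg: "p = (1 - t) *\<^sub>R v + t *\<^sub>R xh"
    unfolding p_def dd_def by (simp add: algebra_simps)
  have p: "p \<in> Kset"
    unfolding seg using K_convex v xh t by (simp add: convex_alt)
  have surrogate: "ft i p v - ft i v v \<le> t * I1 - \<mu>t i * t * (1 - t / 2) * N"
    using strongly_convex_on_segment_le[OF ft_strongly_convex[OF v] v xh
        ft_grad[OF in_O[OF xh] in_O[OF v]] t]
    unfolding p_def dd_def N_def I1_def .
  have "ft i v v - F v + (gf i v - gF v) \<bullet> (t *\<^sub>R dd) + Dl i / 2 * (norm (t *\<^sub>R dd))\<^sup>2 \<le> ft i p v - F p"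
    using surrogate_gap_lower[OF p v v, of i] ft_consistent[OF in_O[OF v]] unfolding p_def by simp
  then have gap: "ft i v v - F v + t * I3 + Dl i / 2 * t\<^sup>2 * N \<le> ft i p v - F p"
    unfolding I3_def N_def by (simp add: power_mult_distrib)
  have G_seg: "G p \<le> (1 - t) * G v + t * G xh"
    unfolding seg using convex_onD[OF G_convex] v xh t by simp
  have vi: "G xh - G v \<le> - I1 - I2"
    using best_response_variational_inequality[OF br v v]
    unfolding I1_def I2_def dd_def by (simp add: inner_diff_right inner_diff_left inner_add_left)
  have young: "- (I2 + I3) \<le> Q / (2 * \<epsilon>) + \<epsilon> / 2 * N"
    using inner_le_young[OF \<epsilon>, of "y - gF v" "- dd"]
    unfolding I2_def I3_def Q_def N_def by (simp add: inner_diff_left)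
  show ?thesis
    using surrogate gap G_seg mult_left_mono[OF vi t(1)] mult_left_mono[OF young t(1)]
    unfolding U_def p_def[symmetric] dd_def[symmetric] N_def[symmetric] Q_def[symmetric]
    by (simp add: algebra_simps power2_eq_square)
qed

lemma best_response_optimality_gap:
  assumes br: "best_response i v y xh" and v: "v \<in> Kset"
  shows "U xh - Ustar \<le> Dmax\<^sup>2 / \<mu> * (norm (xh - v))\<^sup>2 + 1 / \<mu> * (norm (y - gF v))\<^sup>2"
proof -
  define w where "w = xstar - xh"
  define q where "q = (gft i xh v + y - gf i v) - gF xh"
  have xh: "xh \<in> Kset"
    using br by (rule best_response_in_K)
  have "U xh - Ustar \<le> q \<bullet> w - \<mu> / 2 * (norm w)\<^sup>2"
    using F_strongly_convex_lower[OF xstar_in xh] best_response_variational_inequality[OF br v xstar_in]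
    unfolding U_def Ustar_def q_def w_def by (simp add: inner_diff_left)
  also have "\<dots> \<le> (norm q)\<^sup>2 / (2 * \<mu>)"
    using inner_le_young[OF mu_pos, of q w] by simp
  also have "(norm q)\<^sup>2 \<le> 2 * (Dmax\<^sup>2 * (norm (xh - v))\<^sup>2) + 2 * (norm (y - gF v))\<^sup>2"
  proof -
    define r where "r = (gft i xh v - gF xh) - (gft i v v - gF v)"
    have "q = r + (y - gF v)"
      unfolding q_def r_def ft_consistent[OF in_O[OF v]] by (simp add: algebra_simps)
    then have "(norm q)\<^sup>2 \<le> 2 * (norm r)\<^sup>2 + 2 * (norm (y - gF v))\<^sup>2"
      using norm_add_power2_le_weighted[of 1 r "y - gF v"] by simp
    moreover have "norm r \<le> Dmax * norm (xh - v)"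
      using surrogate_gap_grad_lipschitz[OF xh v v, of i] D_le_Dmax[of i] unfolding r_def
      by (meson mult_right_mono norm_ge_zero order_trans)
    then have "(norm r)\<^sup>2 \<le> Dmax\<^sup>2 * (norm (xh - v))\<^sup>2"
      by (metis norm_ge_zero power_mono power_mult_distrib)
    ultimately show ?thesis
      by linarith
  qed
  finally show ?thesis
    using mu_pos by (simp add: divide_right_mono field_simps)
qed

text \<open>Testing the optimality of \<open>xh\<close> against \<open>xstar\<close> and of \<open>xstar\<close> against \<open>xh\<close>, and adding
  the two strong convexity inequalities of the surrogate, bounds \<open>\<mu>t i \<parallel>xh - xstar\<parallel>\<^sup>2\<close> by an
  inner product with a vector that vanishes when \<open>v = xstar\<close> and \<open>y = gF v\<close>.\<close>
lemma best_response_dist_xstar_le: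
  assumes br: "best_response i v y xh" and v: "v \<in> Kset"
  shows "\<mu>t i * norm (xh - xstar) \<le> norm ((y - gF v) + ((gft i xstar v - gF xstar) - (gft i v v - gF v)))"
proof -
  define w where "w = xh - xstar"
  define c where "c = (y - gF v) + ((gft i xstar v - gF xstar) - (gft i v v - gF v))"
  have xh: "xh \<in> Kset"
    using br by (rule best_response_in_K)
  have "ft i xh v + gft i xh v \<bullet> (xstar - xh) + \<mu>t i / 2 * (norm (xstar - xh))\<^sup>2 \<le> ft i xstar v"
    "ft i xstar v + gft i xstar v \<bullet> (xh - xstar) + \<mu>t i / 2 * (norm (xh - xstar))\<^sup>2 \<le> ft i xh v"
    using strongly_convex_on_grad_tangent[OF ft_strongly_convex[OF v] xh xstar_in ft_grad]
      strongly_convex_on_grad_tangent[OF ft_strongly_convex[OF v] xstar_in xh ft_grad]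
    by (simp_all add: in_O xh v xstar_in)
  moreover have "G xh - G xstar \<le> (gft i xh v + y - gf i v) \<bullet> (xstar - xh)"
    by (rule best_response_variational_inequality[OF br v xstar_in])
  moreover have "G xstar - G xh \<le> gF xstar \<bullet> (xh - xstar)"
    by (rule xstar_variational_inequality[OF xh])
  ultimately have "\<mu>t i * (norm w)\<^sup>2 \<le> - (c \<bullet> w)"
    unfolding c_def w_def ft_consistent[OF in_O[OF v]]
    by (simp add: norm_minus_commute inner_diff_right inner_add_left inner_diff_left)
  also have "\<dots> \<le> norm c * norm w"
    using norm_cauchy_schwarz[of "- c" w] by simp
  finally show ?thesis
    unfolding c_def[symmetric] w_def[symmetric] by (cases "w = 0") (simp_all add: power2_eq_square)
qed

lemma best_response_dist_le:
  assumes br: "best_response i v y xh" and v: "v \<in> Kset"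
  shows "norm (xh - v) \<le> (Dmax / \<mu>tmin + 1) * norm (v - xstar) + norm (y - gF v) / \<mu>tmin"
proof -
  define r where "r = (gft i xstar v - gF xstar) - (gft i v v - gF v)"
  have "norm r \<le> D i * norm (xstar - v)"
    unfolding r_def by (rule surrogate_gap_grad_lipschitz[OF xstar_in v v])
  also have "\<dots> \<le> Dmax * norm (v - xstar)"
    using D_le_Dmax by (simp add: norm_minus_commute mult_right_mono)
  finally have "\<mu>tmin * norm (xh - xstar) \<le> norm (y - gF v) + Dmax * norm (v - xstar)"
    using best_response_dist_xstar_le[OF br v] norm_triangle_ineq[of "y - gF v" r]
      mult_right_mono[OF mutmin_le[of i] norm_ge_zero[of "xh - xstar"]]
    unfolding r_def by linarith
  then have "norm (xh - xstar) \<le> (norm (y - gF v) + Dmax * norm (v - xstar)) / \<mu>tmin"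
    using mutmin_pos by (simp add: le_divide_eq mult.commute)
  moreover have "norm (xh - v) \<le> norm (xh - xstar) + norm (v - xstar)"
    using norm_triangle_ineq[of "xh - xstar" "xstar - v"] by (simp add: norm_minus_commute)
  moreover have "(norm (y - gF v) + Dmax * norm (v - xstar)) / \<mu>tmin + norm (v - xstar)
      = (Dmax / \<mu>tmin + 1) * norm (v - xstar) + norm (y - gF v) / \<mu>tmin"
    by (simp add: add_divide_distrib algebra_simps)
  ultimately show ?thesis
    by linarith
qed

end

section \<open>The SONATA iteration\<close>

locale sonata =
  sonata_problem Kset Oset f gf Hf G \<mu> Li xstar ft gft Hft \<mu>t Dl Du m F HF U Ustar Lmax D \<mu>tmin Dlmin Dmax
  + doubly_stochastic W
  for Kset Oset :: "(real^'d::finite) set" and f :: "'i::finite \<Rightarrow> real^'d \<Rightarrow> real"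
    and gf Hf G \<mu> Li xstar ft gft Hft \<mu>t Dl Du m F HF U Ustar Lmax D \<mu>tmin Dlmin Dmax
    and W :: "'i \<Rightarrow> 'i \<Rightarrow> real" +
  fixes x y xhat :: "nat \<Rightarrow> 'i \<Rightarrow> real^'d"
    and \<alpha> \<epsilon>opt \<epsilon>x \<epsilon>y \<rho> a \<sigma> \<eta> C1 C2 :: real
    and d :: "nat \<Rightarrow> 'i \<Rightarrow> real^'d" and p :: "nat \<Rightarrow> real"
  assumes rho_def: "\<rho> = sonata_rho W TYPE('d)"
    and a_def: "a = (1 - \<alpha> / 2) * \<mu>tmin + Dlmin / 2 * \<alpha> - \<epsilon>opt / 2"
    and sigma_def: "\<sigma> = 1 - \<alpha> * a / (Dmax\<^sup>2 / \<mu> + a)"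
    and eta_def: "\<eta> = (\<alpha> / (2 * \<epsilon>opt) * (Dmax\<^sup>2 / \<mu>) + \<alpha> / \<mu> * a) / (Dmax\<^sup>2 / \<mu> + a)"
    and d_def: "d = (\<lambda>\<nu> i. xhat \<nu> i - x \<nu> i)"
    and p_def: "p = (\<lambda>\<nu>. \<Sum>i\<in>UNIV. U (x \<nu> i) - Ustar)"
    and C1_def: "C1 = 6 / \<mu> * ((Dmax / \<mu>tmin + 1)\<^sup>2 + 4 * Lmax\<^sup>2 / \<mu>tmin\<^sup>2)"
    and C2_def: "C2 = 4 / \<mu>tmin\<^sup>2"
    and x0_in: "\<And>i. x 0 i \<in> Kset"
    and y0: "\<And>i. y 0 i = gf i (x 0 i)"
    and xhat_in: "\<And>\<nu> i. xhat \<nu> i \<in> Kset"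
    and xhat_min: "\<And>\<nu> i u. u \<in> Kset \<Longrightarrow>
        ft i (xhat \<nu> i) (x \<nu> i) + (y \<nu> i - gf i (x \<nu> i)) \<bullet> (xhat \<nu> i - x \<nu> i) + G (xhat \<nu> i)
        \<le> ft i u (x \<nu> i) + (y \<nu> i - gf i (x \<nu> i)) \<bullet> (u - x \<nu> i) + G u"
    and x_update: "\<And>\<nu> i. x (Suc \<nu>) i = (\<Sum>j\<in>UNIV. W i j *\<^sub>R (x \<nu> j + \<alpha> *\<^sub>R d \<nu> j))"
    and y_update: "\<And>\<nu> i. y (Suc \<nu>) i =
        (\<Sum>j\<in>UNIV. W i j *\<^sub>R (y \<nu> j + gf j (x (Suc \<nu>) j) - gf j (x \<nu> j)))"
    and alpha_range: "0 < \<alpha>" "\<alpha> \<le> 1"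
    and eps_opt_pos: "\<epsilon>opt > 0" and a_pos: "a > 0"
    and eps_x_pos: "\<epsilon>x > 0" and eps_y_pos: "\<epsilon>y > 0"
begin

lemma step_eq: "x \<nu> i + \<alpha> *\<^sub>R d \<nu> i = (1 - \<alpha>) *\<^sub>R x \<nu> i + \<alpha> *\<^sub>R xhat \<nu> i"
  unfolding d_def by (simp add: algebra_simps)

lemma x_in_K: "x \<nu> i \<in> Kset"
proof (induction \<nu> arbitrary: i)
  case 0
  show ?case by (rule x0_in)
next
  case (Suc \<nu>)
  have "x \<nu> j + \<alpha> *\<^sub>R d \<nu> j \<in> Kset" for j
    unfolding step_eq using K_convex Suc.IH xhat_in alpha_range by (simp add: convex_alt)
  then show ?case
    unfolding x_update using W_rows W_nonneg by (intro convex_sum[OF _ K_convex]) auto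
qed

lemma step_in_K: "x \<nu> i + \<alpha> *\<^sub>R d \<nu> i \<in> Kset"
  unfolding step_eq using K_convex x_in_K xhat_in alpha_range by (simp add: convex_alt)

lemma best_response_xhat: "best_response i (x \<nu> i) (y \<nu> i) (xhat \<nu> i)"
  unfolding best_response_def using xhat_in xhat_min by blast

lemma agent_descent:
  "U (x \<nu> i + \<alpha> *\<^sub>R d \<nu> i) - Ustar
    \<le> U (x \<nu> i) - Ustar - \<alpha> * a * (norm (d \<nu> i))\<^sup>2 + \<alpha> / (2 * \<epsilon>opt) * (norm (y \<nu> i - gF (x \<nu> i)))\<^sup>2"
proof -
  have "a \<le> (1 - \<alpha> / 2) * \<mu>t i + Dl i / 2 * \<alpha> - \<epsilon>opt / 2"
    unfolding a_def using mutmin_le[of i] Dlmin_le[of i] alpha_range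
    by (auto intro!: add_mono mult_left_mono mult_right_mono divide_right_mono)
  then have "\<alpha> * a * (norm (d \<nu> i))\<^sup>2
      \<le> \<alpha> * ((1 - \<alpha> / 2) * \<mu>t i + Dl i / 2 * \<alpha> - \<epsilon>opt / 2) * (norm (d \<nu> i))\<^sup>2"
    using alpha_range by (intro mult_right_mono mult_left_mono) auto
  moreover have "U (x \<nu> i + \<alpha> *\<^sub>R d \<nu> i)
      \<le> U (x \<nu> i) - \<alpha> * ((1 - \<alpha> / 2) * \<mu>t i + Dl i / 2 * \<alpha> - \<epsilon>opt / 2) * (norm (d \<nu> i))\<^sup>2
        + \<alpha> / (2 * \<epsilon>opt) * (norm (y \<nu> i - gF (x \<nu> i)))\<^sup>2"
    using best_response_descent[OF best_response_xhat[where i=i and \<nu>=\<nu>] x_in_K _ _ eps_opt_pos, where t=\<alpha>]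
      alpha_range
    unfolding d_def by simp
  ultimately show ?thesis
    by linarith
qed

lemma agent_contraction:
  "U (x \<nu> i + \<alpha> *\<^sub>R d \<nu> i) - Ustar
    \<le> (1 - \<alpha>) * (U (x \<nu> i) - Ustar) + \<alpha> * (Dmax\<^sup>2 / \<mu>) * (norm (d \<nu> i))\<^sup>2
      + \<alpha> / \<mu> * (norm (y \<nu> i - gF (x \<nu> i)))\<^sup>2"
proof -
  have "U (x \<nu> i + \<alpha> *\<^sub>R d \<nu> i) \<le> (1 - \<alpha>) * U (x \<nu> i) + \<alpha> * U (xhat \<nu> i)"
    unfolding step_eq using convex_onD[OF U_convex] x_in_K xhat_in alpha_range by simp
  moreover have "U (xhat \<nu> i) - Ustar
      \<le> Dmax\<^sup>2 / \<mu> * (norm (d \<nu> i))\<^sup>2 + 1 / \<mu> * (norm (y \<nu> i - gF (x \<nu> i)))\<^sup>2"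
    using best_response_optimality_gap[OF best_response_xhat[where i=i and \<nu>=\<nu>] x_in_K]
    unfolding d_def by simp
  then have "\<alpha> * (U (xhat \<nu> i) - Ustar)
      \<le> \<alpha> * (Dmax\<^sup>2 / \<mu> * (norm (d \<nu> i))\<^sup>2 + 1 / \<mu> * (norm (y \<nu> i - gF (x \<nu> i)))\<^sup>2)"
    using alpha_range by (intro mult_left_mono) auto
  ultimately show ?thesis
    by (simp add: algebra_simps)
qed

text \<open>Weighting the two estimates by \<open>Dmax\<^sup>2 / \<mu>\<close> and \<open>a\<close> eliminates \<open>\<parallel>d \<nu> i\<parallel>\<^sup>2\<close>; this is
  where \<open>\<sigma>\<close> and \<open>\<eta>\<close> come from.\<close>
lemma agent_step:
  "U (x \<nu> i + \<alpha> *\<^sub>R d \<nu> i) - Ustar \<le> \<sigma> * (U (x \<nu> i) - Ustar) + \<eta> * (norm (y \<nu> i - gF (x \<nu> i)))\<^sup>2"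
proof -
  define V where "V = U (x \<nu> i) - Ustar"
  define V' where "V' = U (x \<nu> i + \<alpha> *\<^sub>R d \<nu> i) - Ustar"
  define N where "N = (norm (d \<nu> i))\<^sup>2"
  define e where "e = (norm (y \<nu> i - gF (x \<nu> i)))\<^sup>2"
  define B where "B = Dmax\<^sup>2 / \<mu>"
  have B: "0 \<le> B" "0 < B + a"
    unfolding B_def using mu_pos a_pos by (simp_all add: add_nonneg_pos)
  have "(B + a) * V' \<le> B * (V - \<alpha> * a * N + \<alpha> / (2 * \<epsilon>opt) * e)
      + a * ((1 - \<alpha>) * V + \<alpha> * B * N + \<alpha> / \<mu> * e)"
    using add_mono[OF mult_left_mono[OF agent_descent B(1)]
        mult_left_mono[OF agent_contraction less_imp_le[OF a_pos]]]
    unfolding V_def V'_def N_def e_def B_def by (simp add: distrib_right)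
  also have "\<dots> = ((B + a) * \<sigma>) * V + ((B + a) * \<eta>) * e"
  proof -
    have "(B + a) * \<sigma> = B + a - \<alpha> * a" "(B + a) * \<eta> = \<alpha> / (2 * \<epsilon>opt) * B + \<alpha> / \<mu> * a"
      unfolding sigma_def eta_def B_def[symmetric] using B by (simp_all add: field_simps)
    then show ?thesis
      by (simp only:) (simp add: algebra_simps)
  qed
  also have "\<dots> = (B + a) * (\<sigma> * V + \<eta> * e)"
    by (simp add: algebra_simps)
  finally show ?thesis
    unfolding V_def V'_def e_def using B by simp
qed

lemma p_nonneg: "0 \<le> p \<nu>"
  unfolding p_def using xstar_min[OF x_in_K] unfolding Ustar_def U_def
  by (intro sum_nonneg) (simp add: algebra_simps)

lemma p_step: "p (Suc \<nu>) \<le> \<sigma> * p \<nu> + \<eta> * (\<Sum>i\<in>UNIV. (norm (y \<nu> i - gF (x \<nu> i)))\<^sup>2)"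
proof -
  define w where "w j = x \<nu> j + \<alpha> *\<^sub>R d \<nu> j" for j
  have "U (x (Suc \<nu>) i) - Ustar \<le> (\<Sum>j\<in>UNIV. W i j * (U (w j) - Ustar))" for i
  proof -
    have "U (x (Suc \<nu>) i) \<le> (\<Sum>j\<in>UNIV. W i j * U (w j))"
      unfolding x_update w_def using W_rows W_nonneg step_in_K
      by (intro convex_on_sum[OF _ _ U_convex]) auto
    then show ?thesis
      using W_rows[of i] by (simp add: right_diff_distrib sum_subtractf flip: sum_distrib_right)
  qed
  then have "p (Suc \<nu>) \<le> (\<Sum>i\<in>UNIV. \<Sum>j\<in>UNIV. W i j * (U (w j) - Ustar))"
    unfolding p_def by (rule sum_mono)
  also have "\<dots> = (\<Sum>j\<in>UNIV. U (w j) - Ustar)"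
    by (subst sum.swap) (simp add: W_cols flip: sum_distrib_right)
  also have "\<dots> \<le> (\<Sum>j\<in>UNIV. \<sigma> * (U (x \<nu> j) - Ustar) + \<eta> * (norm (y \<nu> j - gF (x \<nu> j)))\<^sup>2)"
    unfolding w_def by (intro sum_mono agent_step)
  finally show ?thesis
    unfolding p_def by (simp add: sum.distrib sum_distrib_left)
qed

lemma sum_y_eq_sum_gf: "(\<Sum>i\<in>UNIV. y \<nu> i) = (\<Sum>i\<in>UNIV. gf i (x \<nu> i))"
proof (induction \<nu>)
  case 0
  show ?case using y0 by simp
next
  case (Suc \<nu>)
  have "(\<Sum>i\<in>UNIV. y (Suc \<nu>) i) = (\<Sum>j\<in>UNIV. y \<nu> j + gf j (x (Suc \<nu>) j) - gf j (x \<nu> j))"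
    unfolding y_update by (rule sum_mix)
  then show ?case
    using Suc.IH by (simp add: sum.distrib sum_subtractf)
qed

lemma mean_y_minus_gF: "mean (y \<nu>) - gF u = (\<Sum>j\<in>UNIV. (1 / m) *\<^sub>R (gf j (x \<nu> j) - gf j u))"
  unfolding mean_def sum_y_eq_sum_gf gF_def
  by (simp add: m_def sum_subtractf scaleR_diff_right flip: scaleR_sum_right)

lemma sum_tracking_error_le:
  "(\<Sum>i\<in>UNIV. (norm (y \<nu> i - gF (x \<nu> i)))\<^sup>2) \<le> 2 * perp_sq (y \<nu>) + 4 * Lmax\<^sup>2 * perp_sq (x \<nu>)"
proof -
  define yb where "yb = mean (y \<nu>)"
  have "(norm (y \<nu> i - gF (x \<nu> i)))\<^sup>2
      \<le> 2 * (norm (y \<nu> i - yb))\<^sup>2 + 2 * (\<Sum>j\<in>UNIV. (1 / m) * (Lmax\<^sup>2 * (norm (x \<nu> j - x \<nu> i))\<^sup>2))"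
    for i
  proof -
    have "(norm (yb - gF (x \<nu> i)))\<^sup>2 \<le> (\<Sum>j\<in>UNIV. (1 / m) * (norm (gf j (x \<nu> j) - gf j (x \<nu> i)))\<^sup>2)"
      unfolding yb_def mean_y_minus_gF using m_pos m_def by (intro power2_norm_convex_comb_le) auto
    also have "\<dots> \<le> (\<Sum>j\<in>UNIV. (1 / m) * (Lmax\<^sup>2 * (norm (x \<nu> j - x \<nu> i))\<^sup>2))"
      using gf_lipschitz[OF x_in_K x_in_K] m_pos Lmax_nonneg
      by (intro sum_mono mult_left_mono) (auto simp flip: power_mult_distrib intro: power_mono)
    finally show ?thesis
      using norm_add_power2_le_weighted[of 1 "y \<nu> i - yb" "yb - gF (x \<nu> i)"] by simp
  qed
  then have "(\<Sum>i\<in>UNIV. (norm (y \<nu> i - gF (x \<nu> i)))\<^sup>2)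
      \<le> (\<Sum>i\<in>UNIV. 2 * (norm (y \<nu> i - yb))\<^sup>2 + 2 * (\<Sum>j\<in>UNIV. (1 / m) * (Lmax\<^sup>2 * (norm (x \<nu> j - x \<nu> i))\<^sup>2)))"
    by (rule sum_mono)
  also have "\<dots> = 2 * perp_sq (y \<nu>) + 2 * (Lmax\<^sup>2 / m) * (\<Sum>i\<in>UNIV. \<Sum>j\<in>UNIV. (norm (x \<nu> j - x \<nu> i))\<^sup>2)"
    unfolding perp_sq_eq_stack_sq_centered stack_sq_def yb_def
    by (simp add: sum.distrib sum_distrib_left algebra_simps)
  also have "\<dots> = 2 * perp_sq (y \<nu>) + 4 * Lmax\<^sup>2 * perp_sq (x \<nu>)"
    unfolding sum_pairwise_dist_sq m_def[symmetric] using m_pos by simp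
  finally show ?thesis .
qed

lemma perp_sq_x_step:
  "perp_sq (x (Suc \<nu>)) \<le> \<rho>\<^sup>2 * (1 + \<epsilon>x) * perp_sq (x \<nu>) + \<rho>\<^sup>2 * (1 + 1 / \<epsilon>x) * \<alpha>\<^sup>2 * stack_sq (d \<nu>)"
proof -
  have "perp_sq (\<lambda>j. x \<nu> j + \<alpha> *\<^sub>R d \<nu> j)
      \<le> (1 + \<epsilon>x) * perp_sq (x \<nu>) + (1 + 1 / \<epsilon>x) * (\<alpha>\<^sup>2 * perp_sq (d \<nu>))"
    using perp_sq_add_le_weighted[OF eps_x_pos, of "x \<nu>" "\<lambda>j. \<alpha> *\<^sub>R d \<nu> j"]
    unfolding perp_sq_scaleR .
  also have "\<dots> \<le> (1 + \<epsilon>x) * perp_sq (x \<nu>) + (1 + 1 / \<epsilon>x) * (\<alpha>\<^sup>2 * stack_sq (d \<nu>))"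
    using perp_sq_le_stack_sq eps_x_pos by (intro add_left_mono mult_left_mono) auto
  finally have "\<rho>\<^sup>2 * perp_sq (\<lambda>j. x \<nu> j + \<alpha> *\<^sub>R d \<nu> j)
      \<le> \<rho>\<^sup>2 * ((1 + \<epsilon>x) * perp_sq (x \<nu>) + (1 + 1 / \<epsilon>x) * (\<alpha>\<^sup>2 * stack_sq (d \<nu>)))"
    by (rule mult_left_mono) simp
  moreover have "perp_sq (x (Suc \<nu>)) \<le> \<rho>\<^sup>2 * perp_sq (\<lambda>j. x \<nu> j + \<alpha> *\<^sub>R d \<nu> j)"
    unfolding x_update[abs_def] rho_def by (rule perp_sq_mix_le)
  ultimately show ?thesis
    by (simp add: algebra_simps)
qed

lemma stack_sq_x_increment_le:
  "stack_sq (\<lambda>j. x (Suc \<nu>) j - x \<nu> j) \<le> 8 * perp_sq (x \<nu>) + 2 * \<alpha>\<^sup>2 * stack_sq (d \<nu>)"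
proof -
  define c where "c j = x \<nu> j - mean (x \<nu>)" for j
  define A where "A j = (\<Sum>k\<in>UNIV. W j k *\<^sub>R c k) - c j" for j
  define B where "B j = \<alpha> *\<^sub>R (\<Sum>k\<in>UNIV. W j k *\<^sub>R d \<nu> k)" for j
  have "x (Suc \<nu>) j - x \<nu> j = A j + B j" for j
    unfolding x_update A_def B_def c_def
    by (simp add: scaleR_add_right scaleR_diff_right sum.distrib sum_subtractf scaleR_sum_right
        W_rows algebra_simps flip: scaleR_sum_left)
  then have "stack_sq (\<lambda>j. x (Suc \<nu>) j - x \<nu> j) \<le> 2 * stack_sq A + 2 * stack_sq B"
    using stack_sq_add_le_weighted[of 1 A B] by simp
  also have "stack_sq A \<le> 2 * stack_sq (\<lambda>j. \<Sum>k\<in>UNIV. W j k *\<^sub>R c k) + 2 * stack_sq (\<lambda>j. - c j)"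
    using stack_sq_add_le_weighted[of 1 "\<lambda>j. \<Sum>k\<in>UNIV. W j k *\<^sub>R c k" "\<lambda>j. - c j"]
    unfolding A_def by simp
  also have "\<dots> \<le> 4 * perp_sq (x \<nu>)"
    using stack_sq_mix_le[of c] unfolding perp_sq_eq_stack_sq_centered c_def stack_sq_def
    by (simp add: norm_minus_commute)
  also have "stack_sq B \<le> \<alpha>\<^sup>2 * stack_sq (d \<nu>)"
    unfolding B_def stack_sq_scaleR by (intro mult_left_mono stack_sq_mix_le) simp
  finally show ?thesis
    by simp
qed

lemma perp_sq_y_step:
  "perp_sq (y (Suc \<nu>)) \<le> \<rho>\<^sup>2 * (1 + \<epsilon>y) * perp_sq (y \<nu>)
     + \<rho>\<^sup>2 * (1 + 1 / \<epsilon>y) * (8 * Lmax\<^sup>2 * perp_sq (x \<nu>) + 2 * Lmax\<^sup>2 * \<alpha>\<^sup>2 * stack_sq (d \<nu>))"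
proof -
  define \<Delta> where "\<Delta> j = gf j (x (Suc \<nu>) j) - gf j (x \<nu> j)" for j
  have "perp_sq \<Delta> \<le> Lmax\<^sup>2 * stack_sq (\<lambda>j. x (Suc \<nu>) j - x \<nu> j)"
  proof -
    have "(norm (\<Delta> j))\<^sup>2 \<le> Lmax\<^sup>2 * (norm (x (Suc \<nu>) j - x \<nu> j))\<^sup>2" for j
      using gf_lipschitz[OF x_in_K[of "Suc \<nu>" j] x_in_K[of \<nu> j], of j] Lmax_nonneg unfolding \<Delta>_def
      by (simp add: power_mono flip: power_mult_distrib)
    then show ?thesis
      using perp_sq_le_stack_sq[of \<Delta>] unfolding stack_sq_def sum_distrib_left
      by (meson order_trans sum_mono)
  qed
  also have "\<dots> \<le> Lmax\<^sup>2 * (8 * perp_sq (x \<nu>) + 2 * \<alpha>\<^sup>2 * stack_sq (d \<nu>))"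
    by (intro mult_left_mono stack_sq_x_increment_le) simp
  finally have \<Delta>: "perp_sq \<Delta> \<le> 8 * Lmax\<^sup>2 * perp_sq (x \<nu>) + 2 * Lmax\<^sup>2 * \<alpha>\<^sup>2 * stack_sq (d \<nu>)"
    by (simp add: algebra_simps)
  have "y (Suc \<nu>) = (\<lambda>i. \<Sum>j\<in>UNIV. W i j *\<^sub>R (y \<nu> j + \<Delta> j))"
    using y_update by (simp add: fun_eq_iff \<Delta>_def add_diff_eq)
  then have "perp_sq (y (Suc \<nu>)) \<le> \<rho>\<^sup>2 * perp_sq (\<lambda>j. y \<nu> j + \<Delta> j)"
    unfolding rho_def by (simp add: perp_sq_mix_le)
  also have "\<dots> \<le> \<rho>\<^sup>2 * ((1 + \<epsilon>y) * perp_sq (y \<nu>) + (1 + 1 / \<epsilon>y) * perp_sq \<Delta>)"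
    by (intro mult_left_mono perp_sq_add_le_weighted eps_y_pos) simp
  also have "\<dots> \<le> \<rho>\<^sup>2 * ((1 + \<epsilon>y) * perp_sq (y \<nu>)
      + (1 + 1 / \<epsilon>y) * (8 * Lmax\<^sup>2 * perp_sq (x \<nu>) + 2 * Lmax\<^sup>2 * \<alpha>\<^sup>2 * stack_sq (d \<nu>)))"
    using \<Delta> eps_y_pos by (intro mult_left_mono add_left_mono) auto
  finally show ?thesis
    by (simp add: algebra_simps)
qed

lemma tracking_error_le:
  "norm (y \<nu> i - gF (x \<nu> i))
    \<le> norm (y \<nu> i - mean (y \<nu>)) + Lmax * (norm (x \<nu> i - xstar) + (\<Sum>j\<in>UNIV. norm (x \<nu> j - xstar)) / m)"
proof -
  have "norm (mean (y \<nu>) - gF (x \<nu> i)) \<le> (\<Sum>j\<in>UNIV. norm ((1 / m) *\<^sub>R (gf j (x \<nu> j) - gf j (x \<nu> i))))"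
    unfolding mean_y_minus_gF by (rule norm_sum)
  also have "\<dots> \<le> (\<Sum>j\<in>UNIV. (1 / m) * (Lmax * (norm (x \<nu> j - xstar) + norm (x \<nu> i - xstar))))"
  proof (intro sum_mono)
    fix j
    have "norm (gf j (x \<nu> j) - gf j (x \<nu> i)) \<le> Lmax * norm (x \<nu> j - x \<nu> i)"
      by (rule gf_lipschitz[OF x_in_K x_in_K])
    also have "\<dots> \<le> Lmax * (norm (x \<nu> j - xstar) + norm (x \<nu> i - xstar))"
      using norm_triangle_ineq4[of "x \<nu> j - xstar" "x \<nu> i - xstar"] Lmax_nonneg
      by (intro mult_left_mono) auto
    finally have "(1 / m) * norm (gf j (x \<nu> j) - gf j (x \<nu> i))
        \<le> (1 / m) * (Lmax * (norm (x \<nu> j - xstar) + norm (x \<nu> i - xstar)))"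
      using m_pos by (intro mult_left_mono) auto
    then show "norm ((1 / m) *\<^sub>R (gf j (x \<nu> j) - gf j (x \<nu> i)))
        \<le> (1 / m) * (Lmax * (norm (x \<nu> j - xstar) + norm (x \<nu> i - xstar)))"
      using m_pos by simp
  qed
  also have "\<dots> = Lmax * (norm (x \<nu> i - xstar) + (\<Sum>j\<in>UNIV. norm (x \<nu> j - xstar)) / m)"
    using m_pos unfolding m_def
    by (simp add: sum.distrib algebra_simps flip: sum_distrib_left sum_divide_distrib)
  finally show ?thesis
    using norm_triangle_ineq[of "y \<nu> i - mean (y \<nu>)" "mean (y \<nu>) - gF (x \<nu> i)"] by simp
qed

lemma sum_dist_xstar_le: "(\<Sum>j\<in>UNIV. (norm (x \<nu> j - xstar))\<^sup>2) \<le> 2 / \<mu> * p \<nu>"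
proof -
  have "(norm (x \<nu> j - xstar))\<^sup>2 \<le> 2 / \<mu> * (U (x \<nu> j) - Ustar)" for j
    using U_quadratic_growth[OF x_in_K[of \<nu> j]] mu_pos by (simp add: field_simps)
  then show ?thesis
    unfolding p_def sum_distrib_left by (rule sum_mono)
qed

lemma norm_d_le:
  "norm (d \<nu> i) \<le> (Dmax / \<mu>tmin + 1) * norm (x \<nu> i - xstar) + norm (y \<nu> i - mean (y \<nu>)) / \<mu>tmin
    + Lmax / \<mu>tmin * (norm (x \<nu> i - xstar) + (\<Sum>j\<in>UNIV. norm (x \<nu> j - xstar)) / m)"
proof -
  have "norm (d \<nu> i) \<le> (Dmax / \<mu>tmin + 1) * norm (x \<nu> i - xstar) + norm (y \<nu> i - gF (x \<nu> i)) / \<mu>tmin"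
    using best_response_dist_le[OF best_response_xhat x_in_K] unfolding d_def .
  also have "\<dots> \<le> (Dmax / \<mu>tmin + 1) * norm (x \<nu> i - xstar) + (norm (y \<nu> i - mean (y \<nu>))
      + Lmax * (norm (x \<nu> i - xstar) + (\<Sum>j\<in>UNIV. norm (x \<nu> j - xstar)) / m)) / \<mu>tmin"
    using tracking_error_le[of \<nu> i] mutmin_pos by (intro add_left_mono divide_right_mono) auto
  finally show ?thesis
    by (simp add: add_divide_distrib)
qed

lemma stack_sq_d_le: "stack_sq (d \<nu>) \<le> C1 * p \<nu> + C2 * perp_sq (y \<nu>)"
proof -
  define K1 where "K1 = Dmax / \<mu>tmin + 1"
  define e where "e j = norm (x \<nu> j - xstar)" for j
  define eb where "eb = (\<Sum>j\<in>UNIV. e j) / m"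
  define yp where "yp j = norm (y \<nu> j - mean (y \<nu>))" for j
  define S where "S = (\<Sum>j\<in>UNIV. (e j)\<^sup>2)"
  define M where "M = \<mu>tmin"
  have M: "0 < M"
    unfolding M_def by (rule mutmin_pos)
  have "(norm (d \<nu> i))\<^sup>2 \<le> 3 * K1\<^sup>2 * (e i)\<^sup>2 + 3 / M\<^sup>2 * (yp i)\<^sup>2 + 3 * Lmax\<^sup>2 / M\<^sup>2 * (e i + eb)\<^sup>2" for i
  proof -
    have "(norm (d \<nu> i))\<^sup>2 \<le> (K1 * e i + yp i / M + Lmax / M * (e i + eb))\<^sup>2"
      using norm_d_le[of \<nu> i] unfolding K1_def e_def eb_def yp_def M_def by (intro power_mono) auto
    also have "\<dots> \<le> 3 * ((K1 * e i)\<^sup>2 + (yp i / M)\<^sup>2 + (Lmax / M * (e i + eb))\<^sup>2)"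
      by (rule power2_sum3_le)
    also have "\<dots> = 3 * K1\<^sup>2 * (e i)\<^sup>2 + 3 / M\<^sup>2 * (yp i)\<^sup>2 + 3 * Lmax\<^sup>2 / M\<^sup>2 * (e i + eb)\<^sup>2"
      using M by (simp add: power2_eq_square field_simps)
    finally show ?thesis .
  qed
  then have "stack_sq (d \<nu>)
      \<le> (\<Sum>i\<in>UNIV. 3 * K1\<^sup>2 * (e i)\<^sup>2 + 3 / M\<^sup>2 * (yp i)\<^sup>2 + 3 * Lmax\<^sup>2 / M\<^sup>2 * (e i + eb)\<^sup>2)"
    unfolding stack_sq_def by (rule sum_mono)
  also have "\<dots> = 3 * K1\<^sup>2 * S + 3 / M\<^sup>2 * perp_sq (y \<nu>) + 3 * Lmax\<^sup>2 / M\<^sup>2 * (\<Sum>i\<in>UNIV. (e i + eb)\<^sup>2)"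
    unfolding S_def perp_sq_eq_stack_sq_centered stack_sq_def yp_def
    by (simp add: sum.distrib sum_distrib_left)
  also have "\<dots> \<le> 3 * K1\<^sup>2 * S + 4 / M\<^sup>2 * perp_sq (y \<nu>) + 3 * Lmax\<^sup>2 / M\<^sup>2 * (4 * S)"
    using sum_power2_add_mean_le[of e] perp_sq_nonneg[of "y \<nu>"] M
    unfolding eb_def S_def m_def
    by (intro add_mono mult_left_mono mult_right_mono divide_right_mono) auto
  also have "\<dots> = 3 * (K1\<^sup>2 + 4 * Lmax\<^sup>2 / M\<^sup>2) * S + C2 * perp_sq (y \<nu>)"
    unfolding C2_def M_def[symmetric] by (simp add: algebra_simps)
  also have "\<dots> \<le> 3 * (K1\<^sup>2 + 4 * Lmax\<^sup>2 / M\<^sup>2) * (2 / \<mu> * p \<nu>) + C2 * perp_sq (y \<nu>)"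
    using sum_dist_xstar_le[of \<nu>] unfolding S_def e_def
    by (intro add_right_mono mult_left_mono) auto
  also have "\<dots> = C1 * p \<nu> + C2 * perp_sq (y \<nu>)"
    unfolding C1_def K1_def M_def by (simp add: algebra_simps)
  finally show ?thesis .
qed

lemma sigma_nonneg: "0 \<le> \<sigma>"
proof -
  have "\<alpha> * a \<le> Dmax\<^sup>2 / \<mu> + a"
    using alpha_range a_pos mu_pos mult_left_le_one_le[of a \<alpha>] by (simp add: add_increasing)
  then show ?thesis
    unfolding sigma_def using a_pos mu_pos by (simp add: add_nonneg_pos divide_le_eq)
qed

lemma eta_nonneg: "0 \<le> \<eta>"
  unfolding eta_def using alpha_range eps_opt_pos mu_pos a_pos by (simp add: add_nonneg_pos)

lemma maxtr_p_le:
  assumes "\<sigma> < z"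
  shows "maxtr p K z \<le> \<eta> / (z - \<sigma>)
      * (4 * Lmax\<^sup>2 * maxtr (\<lambda>\<nu>. perp_sq (x \<nu>)) K z + 2 * maxtr (\<lambda>\<nu>. perp_sq (y \<nu>)) K z)
    + z / (z - \<sigma>) * p 0"
proof -
  have "maxtr p K z \<le> \<eta> / (z - \<sigma>) * maxtr (\<lambda>\<nu>. 4 * Lmax\<^sup>2 * perp_sq (x \<nu>) + 2 * perp_sq (y \<nu>)) K z
      + z / (z - \<sigma>) * p 0"
  proof (rule maxtr_linear_recursion_le)
    show "p (Suc n) \<le> \<sigma> * p n + \<eta> * (4 * Lmax\<^sup>2 * perp_sq (x n) + 2 * perp_sq (y n))" for n
      using p_step[of n] mult_left_mono[OF sum_tracking_error_le[of n] eta_nonneg] by (simp add: algebra_simps)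
  qed (use p_nonneg perp_sq_nonneg sigma_nonneg eta_nonneg assms in auto)
  also have "\<dots> \<le> \<eta> / (z - \<sigma>)
      * (4 * Lmax\<^sup>2 * maxtr (\<lambda>\<nu>. perp_sq (x \<nu>)) K z + 2 * maxtr (\<lambda>\<nu>. perp_sq (y \<nu>)) K z)
      + z / (z - \<sigma>) * p 0"
    using eta_nonneg assms perp_sq_nonneg
    by (intro add_right_mono mult_left_mono maxtr_lincomb_le) auto
  finally show ?thesis .
qed

lemma maxtr_perp_sq_x_le:
  assumes "\<rho>\<^sup>2 * (1 + \<epsilon>x) < z"
  shows "maxtr (\<lambda>\<nu>. perp_sq (x \<nu>)) K z
    \<le> (1 + 1 / \<epsilon>x) / (z - \<rho>\<^sup>2 * (1 + \<epsilon>x)) * \<rho>\<^sup>2 * \<alpha>\<^sup>2 * maxtr (\<lambda>\<nu>. stack_sq (d \<nu>)) K z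
      + z / (z - \<rho>\<^sup>2 * (1 + \<epsilon>x)) * perp_sq (x 0)"
proof -
  have "maxtr (\<lambda>\<nu>. perp_sq (x \<nu>)) K z
      \<le> \<rho>\<^sup>2 * (1 + 1 / \<epsilon>x) * \<alpha>\<^sup>2 / (z - \<rho>\<^sup>2 * (1 + \<epsilon>x)) * maxtr (\<lambda>\<nu>. stack_sq (d \<nu>)) K z
        + z / (z - \<rho>\<^sup>2 * (1 + \<epsilon>x)) * perp_sq (x 0)"
    using perp_sq_x_step perp_sq_nonneg stack_sq_nonneg assms eps_x_pos
    by (intro maxtr_linear_recursion_le) auto
  then show ?thesis
    by (simp add: field_simps)
qed

lemma maxtr_perp_sq_y_le:
  assumes "\<rho>\<^sup>2 * (1 + \<epsilon>y) < z"
  shows "maxtr (\<lambda>\<nu>. perp_sq (y \<nu>)) K z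
    \<le> (1 + 1 / \<epsilon>y) / (z - \<rho>\<^sup>2 * (1 + \<epsilon>y)) * (8 * Lmax\<^sup>2) * \<rho>\<^sup>2 * maxtr (\<lambda>\<nu>. perp_sq (x \<nu>)) K z
      + (1 + 1 / \<epsilon>y) / (z - \<rho>\<^sup>2 * (1 + \<epsilon>y)) * (2 * Lmax\<^sup>2) * \<rho>\<^sup>2 * \<alpha>\<^sup>2
        * maxtr (\<lambda>\<nu>. stack_sq (d \<nu>)) K z
      + z / (z - \<rho>\<^sup>2 * (1 + \<epsilon>y)) * perp_sq (y 0)"
proof -
  define GY where "GY = (1 + 1 / \<epsilon>y) / (z - \<rho>\<^sup>2 * (1 + \<epsilon>y))"
  have GY: "0 \<le> GY * \<rho>\<^sup>2"
    unfolding GY_def using assms eps_y_pos by simp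
  have "maxtr (\<lambda>\<nu>. perp_sq (y \<nu>)) K z
      \<le> \<rho>\<^sup>2 * (1 + 1 / \<epsilon>y) / (z - \<rho>\<^sup>2 * (1 + \<epsilon>y))
          * maxtr (\<lambda>\<nu>. 8 * Lmax\<^sup>2 * perp_sq (x \<nu>) + 2 * Lmax\<^sup>2 * \<alpha>\<^sup>2 * stack_sq (d \<nu>)) K z
        + z / (z - \<rho>\<^sup>2 * (1 + \<epsilon>y)) * perp_sq (y 0)"
    using perp_sq_y_step assms eps_y_pos by (intro maxtr_linear_recursion_le) auto
  also have "\<rho>\<^sup>2 * (1 + 1 / \<epsilon>y) / (z - \<rho>\<^sup>2 * (1 + \<epsilon>y)) = GY * \<rho>\<^sup>2"
    unfolding GY_def by simp
  also have "GY * \<rho>\<^sup>2 * maxtr (\<lambda>\<nu>. 8 * Lmax\<^sup>2 * perp_sq (x \<nu>) + 2 * Lmax\<^sup>2 * \<alpha>\<^sup>2 * stack_sq (d \<nu>)) K z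
      \<le> GY * \<rho>\<^sup>2 * (8 * Lmax\<^sup>2 * maxtr (\<lambda>\<nu>. perp_sq (x \<nu>)) K z
        + 2 * Lmax\<^sup>2 * \<alpha>\<^sup>2 * maxtr (\<lambda>\<nu>. stack_sq (d \<nu>)) K z)"
    using GY by (intro mult_left_mono maxtr_lincomb_le) auto
  finally show ?thesis
    unfolding GY_def[symmetric] by (simp add: algebra_simps)
qed

lemma maxtr_stack_sq_d_le:
  assumes "0 < z"
  shows "maxtr (\<lambda>\<nu>. stack_sq (d \<nu>)) K z \<le> C1 * maxtr p K z + C2 * maxtr (\<lambda>\<nu>. perp_sq (y \<nu>)) K z"
proof -
  have C: "0 \<le> C1" "0 \<le> C2"
    unfolding C1_def C2_def using mu_pos by auto
  have "\<bar>stack_sq (d \<nu>)\<bar> \<le> \<bar>C1 * p \<nu> + C2 * perp_sq (y \<nu>)\<bar>" for \<nu>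
    using stack_sq_d_le[of \<nu>] C p_nonneg[of \<nu>] perp_sq_nonneg[of "y \<nu>"] by simp
  then have "maxtr (\<lambda>\<nu>. stack_sq (d \<nu>)) K z \<le> maxtr (\<lambda>\<nu>. C1 * p \<nu> + C2 * perp_sq (y \<nu>)) K z"
    using assms by (intro maxtr_mono)
  also have "\<dots> \<le> C1 * maxtr p K z + C2 * maxtr (\<lambda>\<nu>. perp_sq (y \<nu>)) K z"
    using C p_nonneg perp_sq_nonneg by (intro maxtr_lincomb_le) auto
  finally show ?thesis .
qed

end

theorem proposition3p8:
  fixes Kset Oset :: "(real^'d::finite) set"
    and f :: "'i::finite \<Rightarrow> real^'d \<Rightarrow> real"
    and gf :: "'i \<Rightarrow> real^'d \<Rightarrow> real^'d"
    and Hf :: "'i \<Rightarrow> real^'d \<Rightarrow> real^'d \<Rightarrow> real^'d"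
    and G :: "real^'d \<Rightarrow> real"
    and \<mu> L :: real and Li :: "'i \<Rightarrow> real"
    and xstar :: "real^'d"
    and E :: "('i \<times> 'i) set" and W :: "'i \<Rightarrow> 'i \<Rightarrow> real"
    and ft :: "'i \<Rightarrow> real^'d \<Rightarrow> real^'d \<Rightarrow> real"
    and gft :: "'i \<Rightarrow> real^'d \<Rightarrow> real^'d \<Rightarrow> real^'d"
    and Hft :: "'i \<Rightarrow> real^'d \<Rightarrow> real^'d \<Rightarrow> real^'d \<Rightarrow> real^'d"
    and Lt \<mu>t Dl Du :: "'i \<Rightarrow> real"
    and \<alpha> \<epsilon>opt \<epsilon>x \<epsilon>y :: real
    and x y xhat :: "nat \<Rightarrow> 'i \<Rightarrow> real^'d"
  assumes "m = real CARD('i)"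
    and "F = (\<lambda>u. (1 / m) * (\<Sum>i\<in>UNIV. f i u))"
    and "HF = (\<lambda>u h. (1 / m) *\<^sub>R (\<Sum>i\<in>UNIV. Hf i u h))"
    and "U = (\<lambda>u. F u + G u)"
    and "Ustar = F xstar + G xstar"
    and "Lmax = Max (range Li)"
    and "D = (\<lambda>i. max \<bar>Dl i\<bar> \<bar>Du i\<bar>)"
    and "\<mu>tmin = Min (range \<mu>t)"
    and "Dlmin = Min (range Dl)"
    and "Dmax = Max (range D)"
    and "\<rho> = sonata_rho W TYPE('d)"
    and "a = (1 - \<alpha> / 2) * \<mu>tmin + Dlmin / 2 * \<alpha> - \<epsilon>opt / 2"
    and "\<sigma> = 1 - \<alpha> * a / (Dmax\<^sup>2 / \<mu> + a)"
    and "\<eta> = (\<alpha> / (2 * \<epsilon>opt) * (Dmax\<^sup>2 / \<mu>) + \<alpha> / \<mu> * a) / (Dmax\<^sup>2 / \<mu> + a)"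
    and "d = (\<lambda>\<nu> i. xhat \<nu> i - x \<nu> i)"
    and "p = (\<lambda>\<nu>. \<Sum>i\<in>UNIV. U (x \<nu> i) - Ustar)"
    and "C1 = 6 / \<mu> * ((Dmax / \<mu>tmin + 1)\<^sup>2 + 4 * Lmax\<^sup>2 / \<mu>tmin\<^sup>2)"
    and "C2 = 4 / \<mu>tmin\<^sup>2"
  \<comment> \<open>Assumption (A)\<close>
    and K_nonempty: "Kset \<noteq> {}" and K_closed: "closed Kset" and K_convex: "convex Kset"
    and O_open: "open Oset" and K_sub_O: "Kset \<subseteq> Oset"
    and f_grad: "\<And>i u. u \<in> Oset \<Longrightarrow> (f i has_derivative (\<lambda>h. gf i u \<bullet> h)) (at u)"
    and f_hess: "\<And>i u. u \<in> Oset \<Longrightarrow> (gf i has_derivative Hf i u) (at u)"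
    and f_convex: "\<And>i. convex_on Oset (f i)"
    and mu_pos: "\<mu> > 0"
    and F_hess_bounds: "\<And>u h. u \<in> Kset \<Longrightarrow>
        \<mu> * (norm h)\<^sup>2 \<le> h \<bullet> HF u h \<and> h \<bullet> HF u h \<le> L * (norm h)\<^sup>2"
    and G_convex: "convex_on Kset G"
    and xstar_in: "xstar \<in> Kset"
    and xstar_min: "\<And>u. u \<in> Kset \<Longrightarrow> U xstar \<le> U u"
    and xstar_unique: "\<And>u. u \<in> Kset \<Longrightarrow> U u = U xstar \<Longrightarrow> u = xstar"
    and fi_hess_bound: "\<And>i u h. u \<in> Kset \<Longrightarrow> h \<bullet> Hf i u h \<le> Li i * (norm h)\<^sup>2"
  \<comment> \<open>Assumption (B)\<close>
    and E_sym: "\<And>i j. (i, j) \<in> E \<Longrightarrow> (j, i) \<in> E"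
    and E_connected: "\<And>i j. (i, j) \<in> E\<^sup>*"
  \<comment> \<open>Assumption (W)\<close>
    and W_diag: "\<And>i. W i i > 0"
    and W_edge: "\<And>i j. i \<noteq> j \<Longrightarrow> (W i j > 0 \<longleftrightarrow> (i, j) \<in> E)"
    and W_nonedge: "\<And>i j. i \<noteq> j \<Longrightarrow> (i, j) \<notin> E \<Longrightarrow> W i j = 0"
    and W_nonneg: "\<And>i j. W i j \<ge> 0"
    and W_rows: "\<And>i. (\<Sum>j\<in>UNIV. W i j) = 1"
    and W_cols: "\<And>j. (\<Sum>i\<in>UNIV. W i j) = 1"
  \<comment> \<open>Assumption (C)\<close>
    and ft_C2: "\<And>i. C2_on (Oset \<times> Oset) (\<lambda>(u, v). ft i u v)"
    and ft_grad: "\<And>i u v. u \<in> Oset \<Longrightarrow> v \<in> Oset \<Longrightarrow>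
        ((\<lambda>w. ft i w v) has_derivative (\<lambda>h. gft i u v \<bullet> h)) (at u)"
    and ft_hess: "\<And>i u v. u \<in> Oset \<Longrightarrow> v \<in> Oset \<Longrightarrow>
        ((\<lambda>w. gft i w v) has_derivative Hft i u v) (at u)"
    and ft_consistent: "\<And>i u. u \<in> Oset \<Longrightarrow> gft i u u = gf i u"
    and ft_lipschitz: "\<And>i u v w. v \<in> Kset \<Longrightarrow> u \<in> Kset \<Longrightarrow> w \<in> Kset \<Longrightarrow>
        norm (gft i u v - gft i w v) \<le> Lt i * norm (u - w)"
    and ft_strongly_convex: "\<And>i v. v \<in> Kset \<Longrightarrow> strongly_convex_on Kset (\<lambda>w. ft i w v) (\<mu>t i)"
    and mut_pos: "\<And>i. \<mu>t i > 0"
    and Dl_le_Du: "\<And>i. Dl i \<le> Du i"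
    and ft_hess_bounds: "\<And>i u v h. u \<in> Kset \<Longrightarrow> v \<in> Kset \<Longrightarrow>
        Dl i * (norm h)\<^sup>2 \<le> h \<bullet> (Hft i u v h - HF u h) \<and> h \<bullet> (Hft i u v h - HF u h) \<le> Du i * (norm h)\<^sup>2"
  \<comment> \<open>SONATA iteration\<close>
    and x0_in: "\<And>i. x 0 i \<in> Kset"
    and y0: "\<And>i. y 0 i = gf i (x 0 i)"
    and xhat_in: "\<And>\<nu> i. xhat \<nu> i \<in> Kset"
    and xhat_min: "\<And>\<nu> i u. u \<in> Kset \<Longrightarrow>
        ft i (xhat \<nu> i) (x \<nu> i) + (y \<nu> i - gf i (x \<nu> i)) \<bullet> (xhat \<nu> i - x \<nu> i) + G (xhat \<nu> i)
        \<le> ft i u (x \<nu> i) + (y \<nu> i - gf i (x \<nu> i)) \<bullet> (u - x \<nu> i) + G u"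
    and x_update: "\<And>\<nu> i. x (Suc \<nu>) i = (\<Sum>j\<in>UNIV. W i j *\<^sub>R (x \<nu> j + \<alpha> *\<^sub>R d \<nu> j))"
    and y_update: "\<And>\<nu> i. y (Suc \<nu>) i =
        (\<Sum>j\<in>UNIV. W i j *\<^sub>R (y \<nu> j + gf j (x (Suc \<nu>) j) - gf j (x \<nu> j)))"
  \<comment> \<open>Parameters\<close>
    and alpha_range: "0 < \<alpha>" "\<alpha> \<le> 1"
    and eps_opt_pos: "\<epsilon>opt > 0" and a_pos: "a > 0"
    and eps_x_pos: "\<epsilon>x > 0" and eps_y_pos: "\<epsilon>y > 0"
  shows "\<forall>Kn::nat. \<forall>z::real.
      max \<sigma> (max (\<rho>\<^sup>2 * (1 + \<epsilon>x)) (\<rho>\<^sup>2 * (1 + \<epsilon>y))) < z \<and> z < 1 \<longrightarrow>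
      (let P = maxtr p Kn z;
           X = maxtr (\<lambda>\<nu>. perp_sq (x \<nu>)) Kn z;
           Y = maxtr (\<lambda>\<nu>. perp_sq (y \<nu>)) Kn z;
           DD = maxtr (\<lambda>\<nu>. stack_sq (d \<nu>)) Kn z;
           GP = \<eta> / (z - \<sigma>);
           \<omega>p = z / (z - \<sigma>) * p 0;
           GX = (1 + 1 / \<epsilon>x) / (z - \<rho>\<^sup>2 * (1 + \<epsilon>x));
           \<omega>x = z / (z - \<rho>\<^sup>2 * (1 + \<epsilon>x)) * perp_sq (x 0);
           GY = (1 + 1 / \<epsilon>y) / (z - \<rho>\<^sup>2 * (1 + \<epsilon>y));
           \<omega>y = z / (z - \<rho>\<^sup>2 * (1 + \<epsilon>y)) * perp_sq (y 0)
       in P \<le> GP * (4 * Lmax\<^sup>2 * X + 2 * Y) + \<omega>p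
        \<and> X \<le> GX * \<rho>\<^sup>2 * \<alpha>\<^sup>2 * DD + \<omega>x
        \<and> Y \<le> GY * (8 * Lmax\<^sup>2) * \<rho>\<^sup>2 * X + GY * (2 * Lmax\<^sup>2) * \<rho>\<^sup>2 * \<alpha>\<^sup>2 * DD + \<omega>y
        \<and> DD \<le> C1 * P + C2 * Y)"
proof -
  interpret sonata Kset Oset f gf Hf G \<mu> Li xstar ft gft Hft \<mu>t Dl Du m F HF U Ustar Lmax D
      \<mu>tmin Dlmin Dmax W x y xhat \<alpha> \<epsilon>opt \<epsilon>x \<epsilon>y \<rho> a \<sigma> \<eta> C1 C2 d p
    by (unfold_locales; (fact assms)?) (use F_hess_bounds in blast)
  show ?thesis
    unfolding Let_def
    using maxtr_p_le maxtr_perp_sq_x_le maxtr_perp_sq_y_le maxtr_stack_sq_d_le sigma_nonneg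
    by (auto simp: max_less_iff_conj)
qed

end
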